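(* Let $(V,v)$ be a pair of continuous upper and lower probabilities on $(\Omega,\mathcal{F})$. Let $\mathbf{Y}=\{Y_n\}_{n\in\mathbb{N}}$ be a bounded stochastic process (i.e. $\sup_{n,\omega}|Y_n(\omega)|<\infty$) which is stationary on $(\Omega,\mathcal{F},V)$ and such that for every $n\in\mathbb{N}$ the $\sigma$-algebras $\sigma(Y_k,\ k\le n)$ and $\sigma(Y_k,\ k\ge n+1)$ are independent with respect to $V$. Then there is a constant $c$ with $$v\Big(\Big\{\omega\in\Omega:\ \lim_{n\to\infty}\frac1n\sum_{k=1}^{n}Y_k(\omega)=c\Big\}\Big)=1.$$ If moreover $V$ is concave (equivalently $v$ is convex), then $c\in\left[\int_{\Omega}Y_1\, dv,\int_{\Omega}Y_1\, dV\right]$.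
   Context: For a nonempty set $\mathcal{P}$ of finitely additive probabilities on $\mathcal{F}$, $V(A)=\sup_{P\in\mathcal{P}}P(A)$ and $v(A)=\inf_{P\in\mathcal{P}}P(A)$; continuity means convergence of the set function values along increasing and along decreasing sequences of sets. $V$ is concave if $V(A\cup B)+V(A\cap B)\le V(A)+V(B)$. $\mathbf{Y}$ is stationary on $(\Omega,\mathcal{F},V)$ if for all $n\in\mathbb{N}$, $k\in\mathbb{N}_0$ and Borel $A\subseteq\mathbb{R}^{k+1}$, $V(\{(Y_n,\dots,Y_{n+k})\in A\})=V(\{(Y_{n+1},\dots,Y_{n+1+k})\in A\})$. Two $\sigma$-algebras $\mathcal{A},\mathcal{B}$ are independent with respect to $V$ if $V(A\cap B)=V(A)V(B)$ for all $A\in\mathcal{A}$, $B\in\mathcal{B}$. Choquet integral: $\int_{\Omega}\xi\, d\mu=\int_{0}^{\infty}\mu(\{\xi\ge t\})\,dt+\int_{-\infty}^0[\mu(\{\xi\ge t\})-1]\,dt$. *)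

theory Defs
  imports "HOL-Analysis.Analysis"
begin

definition fa_prob :: "'a set \<Rightarrow> 'a set set \<Rightarrow> ('a set \<Rightarrow> real) \<Rightarrow> bool" where
  "fa_prob \<Omega> F P \<longleftrightarrow>
     (\<forall>A\<in>F. 0 \<le> P A) \<and> P \<Omega> = 1 \<and>
     (\<forall>A\<in>F. \<forall>B\<in>F. A \<inter> B = {} \<longrightarrow> P (A \<union> B) = P A + P B)"

definition upper_prob :: "('a set \<Rightarrow> real) set \<Rightarrow> 'a set \<Rightarrow> real" where
  "upper_prob \<P> A = (SUP P\<in>\<P>. P A)"

definition lower_prob :: "('a set \<Rightarrow> real) set \<Rightarrow> 'a set \<Rightarrow> real" where
  "lower_prob \<P> A = (INF P\<in>\<P>. P A)"

definition continuous_setfun :: "'a set set \<Rightarrow> ('a set \<Rightarrow> real) \<Rightarrow> bool" where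
  "continuous_setfun F \<mu> \<longleftrightarrow>
     (\<forall>A. range A \<subseteq> F \<longrightarrow> incseq A \<longrightarrow> (\<lambda>n. \<mu> (A n)) \<longlonglongrightarrow> \<mu> (\<Union>n. A n)) \<and>
     (\<forall>A. range A \<subseteq> F \<longrightarrow> decseq A \<longrightarrow> (\<lambda>n. \<mu> (A n)) \<longlonglongrightarrow> \<mu> (\<Inter>n. A n))"

definition concave_setfun :: "'a set set \<Rightarrow> ('a set \<Rightarrow> real) \<Rightarrow> bool" where
  "concave_setfun F \<mu> \<longleftrightarrow>
     (\<forall>A\<in>F. \<forall>B\<in>F. \<mu> (A \<union> B) + \<mu> (A \<inter> B) \<le> \<mu> A + \<mu> B)"

definition gen_sigma :: "'a set \<Rightarrow> (nat \<Rightarrow> 'a \<Rightarrow> real) \<Rightarrow> nat set \<Rightarrow> 'a set set" where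
  "gen_sigma \<Omega> Y I = sigma_sets \<Omega> {Y k -` B \<inter> \<Omega> | k B. k \<in> I \<and> B \<in> sets borel}"

definition indep_sigma :: "('a set \<Rightarrow> real) \<Rightarrow> 'a set set \<Rightarrow> 'a set set \<Rightarrow> bool" where
  "indep_sigma \<mu> \<A> \<B> \<longleftrightarrow> (\<forall>A\<in>\<A>. \<forall>B\<in>\<B>. \<mu> (A \<inter> B) = \<mu> A * \<mu> B)"

text \<open>Stationarity (indices n \<ge> 1): the law of (Y_n,...,Y_{n+k}) under \<mu>, evaluated on
  Borel sets of R^{k+1} (the product sigma-algebra on {0..k} \<rightarrow> R), does not depend on n.\<close>
definition stationary :: "'a set \<Rightarrow> ('a set \<Rightarrow> real) \<Rightarrow> (nat \<Rightarrow> 'a \<Rightarrow> real) \<Rightarrow> bool" where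
  "stationary \<Omega> \<mu> Y \<longleftrightarrow>
     (\<forall>n\<ge>1. \<forall>k. \<forall>A\<in>sets (Pi\<^sub>M {0..k} (\<lambda>_. borel)).
        \<mu> {\<omega>\<in>\<Omega>. (\<lambda>i\<in>{0..k}. Y (n + i) \<omega>) \<in> A} =
        \<mu> {\<omega>\<in>\<Omega>. (\<lambda>i\<in>{0..k}. Y (n + 1 + i) \<omega>) \<in> A})"

definition choquet :: "'a set \<Rightarrow> ('a set \<Rightarrow> real) \<Rightarrow> ('a \<Rightarrow> real) \<Rightarrow> real" where
  "choquet \<Omega> \<mu> \<xi> =
     (LINT t:{0..}|lborel. \<mu> {\<omega>\<in>\<Omega>. \<xi> \<omega> \<ge> t}) +
     (LINT t:{..<0}|lborel. \<mu> {\<omega>\<in>\<Omega>. \<xi> \<omega> \<ge> t} - 1)"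

end

theory Submission
  imports Defs
begin

text \<open>Continuity of the upper probability \<open>V\<close> and independence of past and future give a
  zero-one law for tail events \<open>T\<close>: \<open>V T = 0\<close> or \<open>V (\<Omega> - T) = 0\<close>. The events
  \<open>limsup S n / n < a\<close> and \<open>liminf S n / n > b\<close> are tail events, and for \<open>b < a\<close> they cannot both
  be \<open>V\<close>-null. Otherwise the blocks of bounded length along which the average stays below \<open>a\<close>
  (or above \<open>b\<close>) would have small upper probability; but a covering argument in the style of
  Katznelson and Weiss shows that every path starts many such blocks, and by stationarity they
  all have the same upper probability. Hence, with \<open>c\<close> the supremum of the \<open>a\<close> for which the
  first event is \<open>V\<close>-null, the averages converge to \<open>c\<close> off a \<open>V\<close>-null set. Counting, for
  each \<open>k \<le> n\<close>, the points of a grid below \<open>Y k\<close> compares \<open>c\<close> with Riemann sums of the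
  Choquet integrals of \<open>Y 1\<close>.\<close>

section \<open>Finitely additive probabilities and their upper envelope\<close>

context algebra
begin

lemma fa_prob_nonneg: "fa_prob \<Omega> M P \<Longrightarrow> A \<in> M \<Longrightarrow> 0 \<le> P A"
  unfolding fa_prob_def by blast

lemma fa_prob_space: "fa_prob \<Omega> M P \<Longrightarrow> P \<Omega> = 1"
  unfolding fa_prob_def by blast

lemma fa_prob_additive:
  "fa_prob \<Omega> M P \<Longrightarrow> A \<in> M \<Longrightarrow> B \<in> M \<Longrightarrow> A \<inter> B = {} \<Longrightarrow> P (A \<union> B) = P A + P B"
  unfolding fa_prob_def by blast

lemma fa_prob_empty: "fa_prob \<Omega> M P \<Longrightarrow> P {} = 0"
  using fa_prob_additive[of P "{}" "{}"] by simp

lemma fa_prob_Diff: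
  assumes P: "fa_prob \<Omega> M P" and "A \<in> M" "B \<in> M" "B \<subseteq> A"
  shows "P (A - B) = P A - P B"
proof -
  have "A = (A - B) \<union> B" using assms by auto
  then have "P A = P (A - B) + P B" using fa_prob_additive[OF P, of "A - B" B] assms by auto
  then show ?thesis by simp
qed

lemma fa_prob_mono:
  "fa_prob \<Omega> M P \<Longrightarrow> A \<in> M \<Longrightarrow> B \<in> M \<Longrightarrow> B \<subseteq> A \<Longrightarrow> P B \<le> P A"
  using fa_prob_Diff[of P A B] fa_prob_nonneg[of P "A - B"] by auto

lemma fa_prob_le_1: "fa_prob \<Omega> M P \<Longrightarrow> A \<in> M \<Longrightarrow> P A \<le> 1"
  using fa_prob_mono[of P \<Omega> A] fa_prob_space[of P] sets_into_space by auto

lemma fa_prob_compl: "fa_prob \<Omega> M P \<Longrightarrow> A \<in> M \<Longrightarrow> P (\<Omega> - A) = 1 - P A"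
  using fa_prob_Diff[of P \<Omega> A] fa_prob_space[of P] sets_into_space by auto

lemma fa_prob_subadditive:
  assumes P: "fa_prob \<Omega> M P" and "A \<in> M" "B \<in> M"
  shows "P (A \<union> B) \<le> P A + P B"
proof -
  have "P (A \<union> B) = P A + P (B - A)"
    using fa_prob_additive[OF P, of A "B - A"] assms by (simp add: Diff)
  then show ?thesis using fa_prob_mono[OF P, of B "B - A"] assms by auto
qed

lemma fa_prob_count_lower:
  assumes P: "fa_prob \<Omega> M P" and "finite I" and "\<And>i. i \<in> I \<Longrightarrow> G i \<in> M" and "A \<in> M"
    and "\<And>\<omega>. \<omega> \<in> A \<Longrightarrow> m \<le> (\<Sum>i\<in>I. of_bool (\<omega> \<in> G i))"
  shows "m * P A \<le> (\<Sum>i\<in>I. P (G i \<inter> A))"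
  using assms(2-)
proof (induction I arbitrary: A m rule: finite_induct)
  case empty
  then show ?case
    by (cases "A = {}") (auto simp: fa_prob_empty[OF P] intro: mult_nonpos_nonneg fa_prob_nonneg[OF P])
next
  case (insert x I)
  have parts: "A \<inter> G x \<in> M" "A - G x \<in> M" using insert.prems by auto
  have in_M: "G i \<inter> (A \<inter> G x) \<in> M" "G i \<inter> (A - G x) \<in> M" if "i \<in> I" for i
    using insert.prems that by auto
  have IH_in: "(m - 1) * P (A \<inter> G x) \<le> (\<Sum>i\<in>I. P (G i \<inter> (A \<inter> G x)))"
    using insert.prems insert.hyps by (intro insert.IH) force+
  have IH_out: "m * P (A - G x) \<le> (\<Sum>i\<in>I. P (G i \<inter> (A - G x)))"
    using insert.prems insert.hyps by (intro insert.IH) force+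
  have split: "P (G i \<inter> A) = P (G i \<inter> (A \<inter> G x)) + P (G i \<inter> (A - G x))" if "i \<in> I" for i
  proof -
    have "G i \<inter> A = (G i \<inter> (A \<inter> G x)) \<union> (G i \<inter> (A - G x))" by blast
    then show ?thesis using fa_prob_additive[OF P in_M[OF that]] by auto
  qed
  have "A = (A \<inter> G x) \<union> (A - G x)" by blast
  then have "P A = P (A \<inter> G x) + P (A - G x)"
    using fa_prob_additive[OF P parts] by auto
  moreover have "(\<Sum>i\<in>insert x I. P (G i \<inter> A))
      = P (A \<inter> G x) + (\<Sum>i\<in>I. P (G i \<inter> (A \<inter> G x))) + (\<Sum>i\<in>I. P (G i \<inter> (A - G x)))"
    using insert.hyps split by (simp add: sum.distrib Int_commute)
  ultimately show ?case using IH_in IH_out by (simp add: algebra_simps)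
qed

end

locale upper_probability = sigma_algebra \<Omega> F for \<Omega> :: "'a set" and F +
  fixes \<P> :: "('a set \<Rightarrow> real) set"
  assumes nonempty: "\<P> \<noteq> {}" and fa_prob: "\<And>P. P \<in> \<P> \<Longrightarrow> fa_prob \<Omega> F P"
begin

abbreviation V :: "'a set \<Rightarrow> real" where "V \<equiv> upper_prob \<P>"

lemma upper_prob_ge: "P \<in> \<P> \<Longrightarrow> A \<in> F \<Longrightarrow> P A \<le> V A"
  unfolding upper_prob_def by (rule cSUP_upper) (auto intro!: bdd_aboveI fa_prob_le_1 fa_prob)

lemma upper_prob_least: "(\<And>P. P \<in> \<P> \<Longrightarrow> P A \<le> x) \<Longrightarrow> V A \<le> x"
  unfolding upper_prob_def using nonempty by (rule cSUP_least)

lemma upper_prob_nonneg: "A \<in> F \<Longrightarrow> 0 \<le> V A"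
  using nonempty upper_prob_ge fa_prob_nonneg[OF fa_prob] by (meson all_not_in_conv order_trans)

lemma upper_prob_le_1: "A \<in> F \<Longrightarrow> V A \<le> 1"
  by (rule upper_prob_least) (rule fa_prob_le_1[OF fa_prob])

lemma upper_prob_empty: "V {} = 0"
  using upper_prob_least[of "{}" 0] upper_prob_nonneg[of "{}"] fa_prob_empty[OF fa_prob] by force

lemma upper_prob_space: "V \<Omega> = 1"
  using upper_prob_le_1[of \<Omega>] upper_prob_ge[of _ \<Omega>] fa_prob_space[OF fa_prob] nonempty by force

lemma upper_prob_mono: "A \<in> F \<Longrightarrow> B \<in> F \<Longrightarrow> B \<subseteq> A \<Longrightarrow> V B \<le> V A"
  by (rule upper_prob_least) (meson fa_prob fa_prob_mono order_trans upper_prob_ge)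

lemma upper_prob_subadditive: "A \<in> F \<Longrightarrow> B \<in> F \<Longrightarrow> V (A \<union> B) \<le> V A + V B"
  by (rule upper_prob_least) (meson add_mono fa_prob fa_prob_subadditive order_trans upper_prob_ge)

lemma lower_prob_eq: "A \<in> F \<Longrightarrow> lower_prob \<P> A = 1 - V (\<Omega> - A)"
proof (rule antisym)
  assume A: "A \<in> F"
  have bdd: "bdd_below ((\<lambda>P. P A) ` \<P>)"
    using A by (auto intro!: bdd_belowI fa_prob_nonneg[OF fa_prob])
  have "V (\<Omega> - A) \<le> 1 - lower_prob \<P> A"
  proof (rule upper_prob_least)
    fix P assume "P \<in> \<P>"
    then show "P (\<Omega> - A) \<le> 1 - lower_prob \<P> A"
      using cINF_lower[OF bdd] fa_prob_compl[OF fa_prob] A unfolding lower_prob_def by fastforce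
  qed
  then show "lower_prob \<P> A \<le> 1 - V (\<Omega> - A)" by simp
  show "1 - V (\<Omega> - A) \<le> lower_prob \<P> A"
    unfolding lower_prob_def using nonempty
  proof (rule cINF_greatest)
    fix P assume "P \<in> \<P>"
    then show "1 - V (\<Omega> - A) \<le> P A"
      using upper_prob_ge[of P "\<Omega> - A"] fa_prob_compl[OF fa_prob, of P A] A by (auto simp: compl_sets)
  qed
qed

lemma upper_prob_count_bound:
  assumes "finite I" and G: "\<And>x. x \<in> I \<Longrightarrow> G x \<in> F" and A: "A \<in> F"
    and "\<And>\<omega>. \<omega> \<in> A \<Longrightarrow> m \<le> (\<Sum>x\<in>I. of_bool (\<omega> \<in> G x))"
  shows "m * (1 - V (\<Omega> - A)) \<le> (\<Sum>x\<in>I. V (G x))"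
proof (cases "m \<le> 0")
  case True
  have "0 \<le> 1 - V (\<Omega> - A)" using upper_prob_le_1[of "\<Omega> - A"] A by (simp add: compl_sets)
  then have "m * (1 - V (\<Omega> - A)) \<le> 0" using True by (simp add: mult_nonpos_nonneg)
  also have "0 \<le> (\<Sum>x\<in>I. V (G x))" using G by (intro sum_nonneg upper_prob_nonneg)
  finally show ?thesis .
next
  case False
  obtain P where P: "P \<in> \<P>" using nonempty by blast
  have "1 - V (\<Omega> - A) \<le> P A"
    using upper_prob_ge[OF P, of "\<Omega> - A"] fa_prob_compl[OF fa_prob[OF P] A] A by (auto simp: compl_sets)
  then have "m * (1 - V (\<Omega> - A)) \<le> m * P A" using False by simp
  also have "\<dots> \<le> (\<Sum>x\<in>I. P (G x \<inter> A))"
    by (rule fa_prob_count_lower[OF fa_prob[OF P]]) (use assms in auto)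
  also have "\<dots> \<le> (\<Sum>x\<in>I. V (G x))"
    by (intro sum_mono order_trans[OF fa_prob_mono[OF fa_prob[OF P]] upper_prob_ge[OF P]])
       (use G A in auto)
  finally show ?thesis .
qed

lemma upper_prob_average_count_bound:
  assumes "finite B" and G: "\<And>k i. 1 \<le> k \<Longrightarrow> i \<in> B \<Longrightarrow> G k i \<in> F"
    and w: "\<And>k i. 1 \<le> k \<Longrightarrow> i \<in> B \<Longrightarrow> V (G k i) \<le> w i"
    and A: "\<And>n. A n \<in> F" and lim: "(\<lambda>n. V (\<Omega> - A n)) \<longlonglongrightarrow> 0"
    and count: "\<And>n \<omega>. 1 \<le> n \<Longrightarrow> \<omega> \<in> A n \<Longrightarrow> real n * K \<le> (\<Sum>k=1..n. \<Sum>i\<in>B. of_bool (\<omega> \<in> G k i))"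
  shows "K \<le> (\<Sum>i\<in>B. w i)"
proof (rule LIMSEQ_le_const2)
  show "(\<lambda>n. K * (1 - V (\<Omega> - A n))) \<longlonglongrightarrow> K"
    using tendsto_mult_left[OF tendsto_diff[OF tendsto_const lim], of K 1] by simp
  have "K * (1 - V (\<Omega> - A n)) \<le> (\<Sum>i\<in>B. w i)" if n: "1 \<le> n" for n
  proof -
    have "real n * K * (1 - V (\<Omega> - A n)) \<le> (\<Sum>x\<in>{1..n} \<times> B. V (case_prod G x))"
    proof (rule upper_prob_count_bound[OF _ _ A])
      fix \<omega> assume "\<omega> \<in> A n"
      then show "real n * K \<le> (\<Sum>x\<in>{1..n} \<times> B. of_bool (\<omega> \<in> case_prod G x))"
        using count[OF n] by (simp add: sum.cartesian_product split_def)
    qed (use \<open>finite B\<close> G in auto)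
    also have "\<dots> \<le> (\<Sum>(k, i)\<in>{1..n} \<times> B. w i)"
      using w by (intro sum_mono) auto
    also have "\<dots> = (\<Sum>k\<in>{1..n}. \<Sum>i\<in>B. w i)"
      by (rule sum.cartesian_product[symmetric])
    also have "\<dots> = real n * (\<Sum>i\<in>B. w i)" by simp
    finally show ?thesis using n by (simp add: mult.assoc)
  qed
  then show "\<exists>N. \<forall>n\<ge>N. K * (1 - V (\<Omega> - A n)) \<le> (\<Sum>i\<in>B. w i)" by blast
qed

end

locale continuous_upper_probability = upper_probability +
  assumes continuous: "continuous_setfun F (upper_prob \<P>)"
begin

lemma upper_prob_incseq:
  "range A \<subseteq> F \<Longrightarrow> incseq A \<Longrightarrow> (\<lambda>n. V (A n)) \<longlonglongrightarrow> V (\<Union>n. A n)"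
  using continuous unfolding continuous_setfun_def by blast

lemma upper_prob_decseq:
  "range A \<subseteq> F \<Longrightarrow> decseq A \<Longrightarrow> (\<lambda>n. V (A n)) \<longlonglongrightarrow> V (\<Inter>n. A n)"
  using continuous unfolding continuous_setfun_def by blast

lemma upper_prob_null_UN:
  fixes A :: "nat \<Rightarrow> 'a set"
  assumes A: "range A \<subseteq> F" and null: "\<And>n. V (A n) = 0"
  shows "V (\<Union>n. A n) = 0"
proof -
  define B where "B n = (\<Union>i<n. A i)" for n
  have B: "range B \<subseteq> F" unfolding B_def using A by blast
  have "V (B n) = 0" for n
  proof (induction n)
    case (Suc n)
    have "V (B (Suc n)) \<le> V (A n) + V (B n)"
      unfolding B_def lessThan_Suc UN_insert using A B
      by (intro upper_prob_subadditive) (auto simp: B_def)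
    then show ?case using null[of n] Suc.IH upper_prob_nonneg[of "B (Suc n)"] B by force
  qed (simp add: B_def upper_prob_empty)
  moreover have "incseq B" unfolding B_def incseq_def by fastforce
  moreover have "(\<Union>n. B n) = (\<Union>n. A n)" unfolding B_def by blast
  ultimately have "(\<lambda>n. 0) \<longlonglongrightarrow> V (\<Union>n. A n)" using upper_prob_incseq[OF B] by simp
  then show ?thesis using LIMSEQ_unique[OF tendsto_const] by metis
qed

lemma upper_prob_Int_mult_incseq:
  assumes A: "range A \<subseteq> F" "incseq A" and T: "T \<in> F"
    and mult: "\<And>n. V (A n \<inter> T) = V (A n) * V T"
  shows "V ((\<Union>n. A n) \<inter> T) = V (\<Union>n. A n) * V T"
proof -
  have "(\<lambda>n. V (A n \<inter> T)) \<longlonglongrightarrow> V (\<Union>n. A n \<inter> T)"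
    using A T by (intro upper_prob_incseq) (auto simp: incseq_def)
  moreover have "(\<lambda>n. V (A n \<inter> T)) \<longlonglongrightarrow> V (\<Union>n. A n) * V T"
    unfolding mult by (intro tendsto_mult_right upper_prob_incseq A)
  moreover have "(\<Union>n. A n \<inter> T) = (\<Union>n. A n) \<inter> T" by blast
  ultimately show ?thesis using LIMSEQ_unique by metis
qed

lemma upper_prob_Int_mult_decseq:
  assumes A: "range A \<subseteq> F" "decseq A" and T: "T \<in> F"
    and mult: "\<And>n. V (A n \<inter> T) = V (A n) * V T"
  shows "V ((\<Inter>n. A n) \<inter> T) = V (\<Inter>n. A n) * V T"
proof -
  have "(\<lambda>n. V (A n \<inter> T)) \<longlonglongrightarrow> V (\<Inter>n. A n \<inter> T)"
    using A T by (intro upper_prob_decseq) (auto simp: decseq_def)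
  moreover have "(\<lambda>n. V (A n \<inter> T)) \<longlonglongrightarrow> V (\<Inter>n. A n) * V T"
    unfolding mult by (intro tendsto_mult_right upper_prob_decseq A)
  moreover have "(\<Inter>n. A n \<inter> T) = (\<Inter>n. A n) \<inter> T" by blast
  ultimately show ?thesis using LIMSEQ_unique by metis
qed

lemma upper_prob_compl_tendsto_0:
  assumes A: "range A \<subseteq> F" and L: "L \<in> F" "V (\<Omega> - L) = 0"
    and ev: "\<And>\<omega>. \<omega> \<in> L \<Longrightarrow> eventually (\<lambda>n. \<omega> \<in> A n) sequentially"
  shows "(\<lambda>n. V (\<Omega> - A n)) \<longlonglongrightarrow> 0"
proof -
  define B where "B M = (\<Union>n\<in>{M..}. \<Omega> - A n)" for M
  have "B M \<in> F" for M
    unfolding B_def using A by (intro countable_UN') auto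
  then have B: "range B \<subseteq> F" by blast
  have "decseq B" unfolding B_def decseq_def by (intro allI impI UN_mono) auto
  moreover have "V (\<Inter>M. B M) = 0"
  proof -
    have "(\<Inter>M. B M) \<subseteq> \<Omega> - L"
    proof
      fix \<omega> assume \<omega>: "\<omega> \<in> (\<Inter>M. B M)"
      have "\<omega> \<notin> L"
      proof
        assume "\<omega> \<in> L"
        then obtain M where "\<forall>n\<ge>M. \<omega> \<in> A n" using ev unfolding eventually_sequentially by blast
        then show False using \<omega> by (auto simp: B_def)
      qed
      then show "\<omega> \<in> \<Omega> - L" using \<omega> by (auto simp: B_def)
    qed
    then have "V (\<Inter>M. B M) \<le> V (\<Omega> - L)"
      using B L by (intro upper_prob_mono countable_INT) auto
    then show ?thesis using L upper_prob_nonneg[of "\<Inter>M. B M"] B by (auto intro: antisym)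
  qed
  ultimately have lim: "(\<lambda>M. V (B M)) \<longlonglongrightarrow> 0" using upper_prob_decseq[OF B] by simp
  have bounds: "0 \<le> V (\<Omega> - A n)" "V (\<Omega> - A n) \<le> V (B n)" for n
  proof -
    have "\<Omega> - A n \<in> F" "\<Omega> - A n \<subseteq> B n" using A unfolding B_def by auto
    then show "0 \<le> V (\<Omega> - A n)" "V (\<Omega> - A n) \<le> V (B n)"
      using B upper_prob_mono[of "B n" "\<Omega> - A n"] upper_prob_nonneg by auto
  qed
  show ?thesis
    by (rule tendsto_sandwich[OF _ _ tendsto_const lim]) (simp_all add: bounds)
qed

end

section \<open>Averages of real sequences\<close>

lemma eventually_slope_below_iff:
  fixes x :: "nat \<Rightarrow> real"
  shows "(\<exists>b<a. \<forall>\<^sub>F n in sequentially. x n \<le> real n * b)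
     \<longleftrightarrow> (\<exists>j. \<forall>n\<ge>j. x n \<le> real n * (a - 1 / real (Suc j)))"
proof
  assume "\<exists>b<a. \<forall>\<^sub>F n in sequentially. x n \<le> real n * b"
  then obtain b M where b: "b < a" and M: "\<And>n. n \<ge> M \<Longrightarrow> x n \<le> real n * b"
    unfolding eventually_sequentially by blast
  obtain k where k: "inverse (real (Suc k)) < a - b" using reals_Archimedean[of "a - b"] b by auto
  define j where "j = max k M"
  have "b \<le> a - 1 / real (Suc j)"
  proof -
    have "1 / real (Suc j) \<le> 1 / real (Suc k)" unfolding j_def by (simp add: frac_le)
    then show ?thesis using k by (simp add: inverse_eq_divide)
  qed
  then have "x n \<le> real n * (a - 1 / real (Suc j))" if "n \<ge> j" for n
    using M[of n] that mult_left_mono[of b _ "real n"] unfolding j_def by fastforce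
  then show "\<exists>j. \<forall>n\<ge>j. x n \<le> real n * (a - 1 / real (Suc j))" by blast
next
  assume "\<exists>j. \<forall>n\<ge>j. x n \<le> real n * (a - 1 / real (Suc j))"
  then obtain j where "\<forall>n\<ge>j. x n \<le> real n * (a - 1 / real (Suc j))" by blast
  then show "\<exists>b<a. \<forall>\<^sub>F n in sequentially. x n \<le> real n * b"
    unfolding eventually_sequentially by (intro exI[of _ "a - 1 / real (Suc j)"]) auto
qed

lemma eventually_slope_below_perturb:
  fixes x y :: "nat \<Rightarrow> real"
  assumes "\<exists>b<a. \<forall>\<^sub>F n in sequentially. x n \<le> real n * b"
    and "\<forall>\<^sub>F n in sequentially. \<bar>x n - y n\<bar> \<le> d"
  shows "\<exists>b<a. \<forall>\<^sub>F n in sequentially. y n \<le> real n * b"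
proof -
  obtain b where b: "b < a" and ev_x: "\<forall>\<^sub>F n in sequentially. x n \<le> real n * b"
    using assms(1) by blast
  define b' where "b' = (a + b) / 2"
  obtain N where N: "d / (b' - b) \<le> real N" using real_arch_simple by blast
  have gap: "0 < b' - b" using b unfolding b'_def by simp
  have "d \<le> real n * (b' - b)" if "N \<le> n" for n
  proof -
    have "d / (b' - b) \<le> real n" using N that by (meson of_nat_le_iff order_trans)
    then show ?thesis by (simp add: pos_divide_le_eq[OF gap])
  qed
  then have "\<forall>\<^sub>F n in sequentially. d \<le> real n * (b' - b)"
    unfolding eventually_sequentially by blast
  then have "\<forall>\<^sub>F n in sequentially. y n \<le> real n * b'"
    using ev_x assms(2) by eventually_elim (auto simp: algebra_simps)
  moreover have "b' < a" using b unfolding b'_def by simp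
  ultimately show ?thesis by blast
qed

lemma sum_ge_short_stretch:
  fixes y :: "nat \<Rightarrow> real"
  assumes y: "\<And>i. - C \<le> y i" and K: "a + C \<le> K" "0 \<le> K" and "L - j \<le> N"
  shows "a * real (L - j) - K * real N \<le> (\<Sum>i\<in>{j..<L}. y i)"
proof -
  have "(a + C) * real (L - j) \<le> K * real N"
    using assms(4) K by (cases "a + C \<le> 0")
      (auto intro: order_trans[OF mult_nonpos_nonneg] order_trans[OF mult_right_mono mult_left_mono])
  moreover have "(\<Sum>i\<in>{j..<L}. - C) \<le> (\<Sum>i\<in>{j..<L}. y i)"
    using y by (intro sum_mono) auto
  ultimately show ?thesis by (simp add: algebra_simps)
qed

text \<open>A covering argument for partial sums: starting from \<open>j\<close>, jump over a block of length
  \<open>n \<le> N\<close> with average at least \<open>a\<close> whenever there is one, and otherwise advance by one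
  step at a cost of at most \<open>K\<close>; the last \<open>N\<close> steps cost at most \<open>K N\<close> in total.\<close>
lemma sum_ge_by_blocks:
  fixes y :: "nat \<Rightarrow> real"
  assumes y: "\<And>i. - C \<le> y i" and K: "a + C \<le> K" "0 \<le> K" and "j \<le> L"
  shows "a * real (L - j)
           - K * ((\<Sum>i\<in>{j..<L}. of_bool (\<forall>n\<in>{1..N}. (\<Sum>k<n. y (i + k)) < real n * a)) + real N)
         \<le> (\<Sum>i\<in>{j..<L}. y i)"
  using \<open>j \<le> L\<close>
proof (induction "L - j" arbitrary: j rule: less_induct)
  case less
  let ?bad = "\<lambda>i. of_bool (\<forall>n\<in>{1..N}. (\<Sum>k<n. y (i + k)) < real n * a) :: real"
  have bad_nonneg: "0 \<le> (\<Sum>i\<in>I. ?bad i)" for I by (intro sum_nonneg) auto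
  show ?case
  proof (cases "L - j \<le> N")
    case True
    have "0 \<le> K * (\<Sum>i\<in>{j..<L}. ?bad i)" using K(2) bad_nonneg by simp
    then show ?thesis
      using sum_ge_short_stretch[where y = y, OF y K True] unfolding distrib_left by linarith
  next
    case False
    show ?thesis
    proof (cases "?bad j = 1")
      case True
      have IH: "a * real (L - Suc j) - K * ((\<Sum>i\<in>{Suc j..<L}. ?bad i) + real N) \<le> (\<Sum>i\<in>{Suc j..<L}. y i)"
        using False by (intro less.hyps) auto
      have "{j..<L} = insert j {Suc j..<L}" using False by auto
      then show ?thesis using IH True y[of j] K(1) False by (simp add: algebra_simps of_nat_diff)
    next
      case False
      then obtain n where n: "n \<in> {1..N}" "real n * a \<le> (\<Sum>k<n. y (j + k))" by (auto simp: not_less)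
      have jn: "j + n \<le> L" using n \<open>\<not> L - j \<le> N\<close> by auto
      have IH: "a * real (L - (j + n)) - K * ((\<Sum>i\<in>{j + n..<L}. ?bad i) + real N) \<le> (\<Sum>i\<in>{j + n..<L}. y i)"
        using n jn by (intro less.hyps) auto
      have "(\<Sum>k<n. y (j + k)) = (\<Sum>i\<in>{j..<j + n}. y i)"
        by (simp add: sum.atLeastLessThan_shift_0[of y j "j + n"] atLeast0LessThan add.commute)
      then have sum_y: "real n * a + (\<Sum>i\<in>{j + n..<L}. y i) \<le> (\<Sum>i\<in>{j..<L}. y i)"
        using n(2) sum.atLeastLessThan_concat[of j "j + n" L y] jn by simp
      have "(\<Sum>i\<in>{j + n..<L}. ?bad i) \<le> (\<Sum>i\<in>{j..<L}. ?bad i)"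
        by (intro sum_mono2) auto
      then have "K * ((\<Sum>i\<in>{j + n..<L}. ?bad i) + real N) \<le> K * ((\<Sum>i\<in>{j..<L}. ?bad i) + real N)"
        using K(2) by (intro mult_left_mono) auto
      moreover have "a * real (L - j) = real n * a + a * real (L - (j + n))"
        using jn by (simp add: of_nat_diff algebra_simps)
      ultimately show ?thesis using IH sum_y by linarith
    qed
  qed
qed

lemma grid_count_le:
  fixes x d :: real
  assumes "0 < d" "0 \<le> x"
  shows "d * (\<Sum>i\<in>{1..m}. of_bool (real i * d \<le> x)) \<le> x"
proof (induction m)
  case (Suc m)
  show ?case
  proof (cases "real (Suc m) * d \<le> x")
    case True
    have "(\<Sum>i\<in>{1..m}. of_bool (real i * d \<le> x)) \<le> (\<Sum>i\<in>{1..m}. 1::real)" by (intro sum_mono) auto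
    then have "d * (\<Sum>i\<in>{1..Suc m}. of_bool (real i * d \<le> x)) \<le> d * real (Suc m)"
      using True \<open>0 < d\<close> by simp
    then show ?thesis using True by (simp add: mult.commute)
  qed (use Suc.IH in simp)
qed (use assms in simp)

lemma le_grid_count:
  fixes x d :: real
  assumes "0 < d" "x \<le> real m * d"
  shows "x \<le> d * (\<Sum>i<m. of_bool (real i * d \<le> x))"
  using assms(2)
proof (induction m)
  case (Suc m)
  show ?case
  proof (cases "x \<le> real m * d")
    case True
    then show ?thesis using Suc.IH \<open>0 < d\<close> by (simp add: distrib_left)
  next
    case False
    have "real i * d \<le> x" if "i < Suc m" for i
    proof -
      have "real i * d \<le> real m * d" using that \<open>0 < d\<close> by (intro mult_right_mono) auto
      then show ?thesis using False by linarith
    qed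
    then have "(\<Sum>i<Suc m. of_bool (real i * d \<le> x)) = (\<Sum>i<Suc m. 1::real)"
      by (intro sum.cong) auto
    then show ?thesis using Suc.prems by (simp add: mult.commute)
  qed
qed simp

lemma ex_mesh_less:
  fixes c e :: real
  assumes "0 < e"
  shows "\<exists>m::nat \<ge> 1. c / real m < e"
proof -
  obtain m :: nat where m: "max (c / e) 0 < real m" using reals_Archimedean2 by blast
  then have "1 \<le> m" by simp
  moreover have "c / real m < e"
    using m assms by (simp add: divide_less_eq mult.commute pos_divide_less_eq)
  ultimately show ?thesis by blast
qed

section \<open>Riemann sums for Choquet integrals\<close>

lemma set_integrable_const_Ioc: "set_integrable lborel {a<..b::real} (\<lambda>_. c::real)"
proof -
  have "emeasure lborel {a<..b} < \<infinity>"
    by (cases "a \<le> b") (simp_all add: emeasure_lborel_Ioc)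
  then show ?thesis
    unfolding set_integrable_def by (simp add: integrable_real_indicator)
qed

locale survival_function =
  fixes g :: "real \<Rightarrow> real" and C :: real
  assumes antimono: "\<And>s t. s \<le> t \<Longrightarrow> g t \<le> g s"
    and below: "\<And>t. t \<le> - C \<Longrightarrow> g t = 1"
    and above: "\<And>t. C < t \<Longrightarrow> g t = 0"
    and C_pos: "0 < C"
begin

definition survival_integral :: real where
  "survival_integral = (LINT t:{0..}|lborel. g t) + (LINT t:{..<0}|lborel. g t - 1)"

lemma le_1: "g t \<le> 1"
  using antimono[of "min t (- C)" t] below[of "min t (- C)"] by simp

lemma nonneg: "0 \<le> g t"
  using antimono[of t "max t (C + 1)"] above[of "max t (C + 1)"] by simp

lemma borel_measurable [measurable]: "g \<in> borel_measurable borel"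
proof -
  have "(\<lambda>t. - g t) \<in> borel_measurable borel"
    by (rule borel_measurable_mono) (simp add: mono_def antimono)
  then show ?thesis by simp
qed

lemma set_integrable_Ioc: "set_integrable lborel {a<..b} g"
proof (rule set_integrable_bound[of lborel _ "\<lambda>_. 1::real"])
  show "set_integrable lborel {a<..b} (\<lambda>_. 1::real)" by (rule set_integrable_const_Ioc)
  show "set_borel_measurable lborel {a<..b} g" unfolding set_borel_measurable_def by measurable
qed (use le_1 nonneg in auto)

definition area :: "real \<Rightarrow> real \<Rightarrow> real" where "area a b = (LINT t:{a<..b}|lborel. g t)"

lemma area_bounds:
  assumes "a \<le> b"
  shows "(b - a) * g b \<le> area a b" "area a b \<le> (b - a) * g a"
proof -
  have const: "(LINT t:{a<..b}|lborel. c) = (b - a) * c" for c :: real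
    using assms by (simp add: set_integral_const emeasure_lborel_Ioc)
  note const_int = set_integrable_const_Ioc[of a b]
  show "(b - a) * g b \<le> area a b"
    unfolding area_def const[symmetric]
    by (rule set_integral_mono[OF const_int set_integrable_Ioc]) (auto intro: antimono)
  show "area a b \<le> (b - a) * g a"
    unfolding area_def const[symmetric]
    by (rule set_integral_mono[OF set_integrable_Ioc const_int]) (auto intro: antimono)
qed

lemma area_add: "a \<le> b \<Longrightarrow> b \<le> c \<Longrightarrow> area a c = area a b + area b c"
proof -
  assume "a \<le> b" "b \<le> c"
  then have "{a<..c} = {a<..b} \<union> {b<..c}" by auto
  then show ?thesis
    unfolding area_def
    using set_integral_Un[OF _ set_integrable_Ioc set_integrable_Ioc, of a b b c] by simp
qed

lemma area_Riemann_sums: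
  assumes "0 \<le> d"
  shows "d * (\<Sum>i\<in>{1..n}. g (a + real i * d)) \<le> area a (a + real n * d)"
    and "area a (a + real n * d) \<le> d * (\<Sum>i<n. g (a + real i * d))"
proof (induction n)
  case 0
  { case 1 show ?case by (simp add: area_def set_lebesgue_integral_def) }
  { case 2 show ?case by (simp add: area_def set_lebesgue_integral_def) }
next
  case (Suc n)
  have step: "a + real n * d \<le> a + real (Suc n) * d" "a \<le> a + real n * d"
    using assms by (auto simp: algebra_simps)
  note bounds = area_bounds[OF step(1)] and add = area_add[OF step(2,1)]
  have width: "a + real (Suc n) * d - (a + real n * d) = d" by (simp add: algebra_simps)
  { case 1 show ?case using Suc.IH(1) bounds(1) add width by (simp add: distrib_left) }
  { case 2 show ?case using Suc.IH(2) bounds(2) add width by (simp add: distrib_left) }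
qed

lemma set_measurable:
  assumes "A \<in> sets borel"
  shows "set_borel_measurable lborel A g" "set_borel_measurable lborel A (\<lambda>t. g t - 1)"
  using assms unfolding set_borel_measurable_def by simp_all

lemma integral_nonneg_part: "(LINT t:{0..}|lborel. g t) = area 0 C"
proof -
  have "(LINT t:{0..}|lborel. g t) = (LINT t:{0<..}|lborel. g t)"
    by (rule set_integral_cong_set[OF set_measurable(1) set_measurable(1)])
      (use AE_lborel_singleton[of "0::real"] in auto)
  also have "\<dots> = area 0 C + (LINT t:{C<..}|lborel. g t)"
  proof -
    have tail: "set_integrable lborel {C<..} g"
      by (rule set_integrable_bound[of _ _ "\<lambda>_. 0::real"])
        (auto simp: set_integrable_def set_measurable above)
    have split: "{0<..} = {0<..C} \<union> {C<..}" using C_pos by auto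
    have "{0<..C} \<inter> {C<..} = {}" by auto
    then show ?thesis
      unfolding area_def split by (rule set_integral_Un[OF _ set_integrable_Ioc tail])
  qed
  also have "(LINT t:{C<..}|lborel. g t) = 0"
    using set_lebesgue_integral_cong[of "{C<..}" lborel g "\<lambda>_. 0"] above
    by (simp add: set_lebesgue_integral_def)
  finally show ?thesis by simp
qed

lemma integral_nonpos_part: "(LINT t:{..<0}|lborel. g t - 1) = area (- C) 0 - C"
proof -
  have "(LINT t:{..<0}|lborel. g t - 1) = (LINT t:{..0}|lborel. g t - 1)"
    by (rule set_integral_cong_set[OF set_measurable(2) set_measurable(2)])
      (use AE_lborel_singleton[of "0::real"] in auto)
  also have "\<dots> = (LINT t:{..- C}|lborel. g t - 1) + (LINT t:{- C<..0}|lborel. g t - 1)"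
  proof -
    have head: "set_integrable lborel {..- C} (\<lambda>t. g t - 1)"
      by (rule set_integrable_bound[of _ _ "\<lambda>_. 0::real"])
        (auto simp: set_integrable_def set_measurable below)
    have "set_integrable lborel {- C<..0} (\<lambda>t. g t - 1)"
      using set_integral_diff(1)[OF set_integrable_Ioc set_integrable_const_Ioc] .
    moreover have split: "{..0} = {..- C} \<union> {- C<..0}" using C_pos by auto
    moreover have "{..- C} \<inter> {- C<..0} = {}" by auto
    ultimately show ?thesis
      unfolding split by (intro set_integral_Un[OF _ head])
  qed
  also have "(LINT t:{..- C}|lborel. g t - 1) = 0"
    using set_lebesgue_integral_cong[of "{..- C}" lborel "\<lambda>t. g t - 1" "\<lambda>_. 0"] below
    by (simp add: set_lebesgue_integral_def)
  also have "(LINT t:{- C<..0}|lborel. g t - 1) = area (- C) 0 - C"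
    unfolding area_def using C_pos
    by (simp add: set_integral_diff(2)[OF set_integrable_Ioc set_integrable_const_Ioc]
        set_integral_const emeasure_lborel_Ioc)
  finally show ?thesis by simp
qed

lemma survival_integral_eq_area: "survival_integral = area (- C) C - C"
  unfolding survival_integral_def integral_nonneg_part integral_nonpos_part
  using area_add[of "- C" 0 C] C_pos by simp

lemma Riemann_sums_survival_integral:
  assumes "1 \<le> m" and d: "d = 2 * C / real m"
  shows "- C + d * (\<Sum>i<m. g (- C + real i * d)) \<le> survival_integral + d"
    and "survival_integral \<le> - C + d * (\<Sum>i\<in>{1..m}. g (- C + real i * d)) + d"
proof -
  have "0 \<le> d" "- C + real m * d = C" using assms C_pos by auto
  note sums = area_Riemann_sums[OF \<open>0 \<le> d\<close>, where n = m and a = "- C", unfolded \<open>- C + real m * d = C\<close>]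
  have "(\<Sum>i<m. g (- C + real i * d)) = g (- C) + (\<Sum>i\<in>{1..<m}. g (- C + real i * d))"
    using \<open>1 \<le> m\<close> by (simp add: sum.atLeast_Suc_lessThan atLeast0LessThan[symmetric])
  also have "\<dots> \<le> 1 + (\<Sum>i\<in>{1..m}. g (- C + real i * d))"
    using le_1 nonneg by (intro add_mono sum_mono2) auto
  finally have "d * (\<Sum>i<m. g (- C + real i * d)) \<le> d * (1 + (\<Sum>i\<in>{1..m}. g (- C + real i * d)))"
    using \<open>0 \<le> d\<close> by (rule mult_left_mono)
  then have "d * (\<Sum>i<m. g (- C + real i * d)) \<le> d + d * (\<Sum>i\<in>{1..m}. g (- C + real i * d))"
    by (simp add: distrib_left)
  then show "- C + d * (\<Sum>i<m. g (- C + real i * d)) \<le> survival_integral + d"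
    and "survival_integral \<le> - C + d * (\<Sum>i\<in>{1..m}. g (- C + real i * d)) + d"
    using sums survival_integral_eq_area by linarith+
qed

end

locale indep_stationary_process = continuous_upper_probability +
  fixes Y :: "nat \<Rightarrow> 'a \<Rightarrow> real" and C :: real
  assumes Y_measurable: "\<And>n B. 1 \<le> n \<Longrightarrow> B \<in> sets borel \<Longrightarrow> Y n -` B \<inter> \<Omega> \<in> F"
    and stationary: "stationary \<Omega> (upper_prob \<P>) Y"
    and indep: "\<And>n. 1 \<le> n \<Longrightarrow>
      indep_sigma (upper_prob \<P>) (gen_sigma \<Omega> Y {1..n}) (gen_sigma \<Omega> Y {n+1..})"
    and bounded: "\<And>n \<omega>. 1 \<le> n \<Longrightarrow> \<omega> \<in> \<Omega> \<Longrightarrow> \<bar>Y n \<omega>\<bar> \<le> C"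
    and C_pos: "0 < C"
begin

text \<open>The zero measure on \<open>gen_sigma \<Omega> Y I\<close>, used only to make the measurability prover available.\<close>
definition gen_measure :: "nat set \<Rightarrow> 'a measure" where
  "gen_measure I = measure_of \<Omega> (gen_sigma \<Omega> Y I) (\<lambda>_. 0)"

lemma generators_Pow: "{Y k -` B \<inter> \<Omega> | k B. k \<in> I \<and> B \<in> sets borel} \<subseteq> Pow \<Omega>"
  by auto

lemma gen_sigma_Pow: "gen_sigma \<Omega> Y I \<subseteq> Pow \<Omega>"
  unfolding gen_sigma_def using sigma_sets_into_sp[OF generators_Pow] by blast

lemma sets_gen_measure: "sets (gen_measure I) = gen_sigma \<Omega> Y I"
  unfolding gen_measure_def using sets_measure_of[OF gen_sigma_Pow]
  by (simp add: gen_sigma_def sigma_sets_sigma_sets_eq[OF generators_Pow])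

lemma space_gen_measure: "space (gen_measure I) = \<Omega>"
  unfolding gen_measure_def using space_measure_of[OF gen_sigma_Pow] by simp

lemma Y_gen_measurable [measurable]: "i \<in> I \<Longrightarrow> Y i \<in> borel_measurable (gen_measure I)"
  unfolding measurable_def sets_gen_measure space_gen_measure gen_sigma_def
  by (auto intro!: sigma_sets.Basic)

lemma gen_sigma_subset: "I \<subseteq> {1..} \<Longrightarrow> gen_sigma \<Omega> Y I \<subseteq> F"
  unfolding gen_sigma_def by (rule sigma_sets_subset) (use Y_measurable in force)

definition S :: "nat \<Rightarrow> 'a \<Rightarrow> real" where "S n \<omega> = (\<Sum>k=1..n. Y k \<omega>)"

lemma S_gen_measurable [measurable]: "{1..n} \<subseteq> I \<Longrightarrow> S n \<in> borel_measurable (gen_measure I)"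
  unfolding S_def by (intro borel_measurable_sum Y_gen_measurable) auto

lemma abs_S_le:
  assumes "\<omega> \<in> \<Omega>"
  shows "\<bar>S n \<omega>\<bar> \<le> real n * C"
proof -
  have "\<bar>S n \<omega>\<bar> \<le> (\<Sum>k=1..n. \<bar>Y k \<omega>\<bar>)" unfolding S_def by (rule sum_abs)
  also have "\<dots> \<le> (\<Sum>k=1..n. C)" using bounded assms by (intro sum_mono) auto
  finally show ?thesis by simp
qed

lemma S_eq_sum_lessThan: "S n \<omega> = (\<Sum>i<n. Y (Suc i) \<omega>)"
  unfolding S_def using sum.atLeast1_atMost_eq[of "\<lambda>k. Y k \<omega>" n] by simp

lemma Y_ge_in_F: "1 \<le> k \<Longrightarrow> {\<omega>\<in>\<Omega>. t \<le> Y k \<omega>} \<in> F"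
  using Y_measurable[of k "{t..}"] by (simp add: Int_commute vimage_def Collect_conj_eq)

lemma Y_less_in_F: "1 \<le> k \<Longrightarrow> {\<omega>\<in>\<Omega>. Y k \<omega> < t} \<in> F"
  using Y_measurable[of k "{..<t}"] by (simp add: Int_commute vimage_def Collect_conj_eq)

lemma S_level_sets_in_F: "{\<omega>\<in>\<Omega>. c \<le> S n \<omega>} \<in> F" "{\<omega>\<in>\<Omega>. S n \<omega> \<le> c} \<in> F"
proof -
  have "{\<omega>\<in>space (gen_measure {1..}). c \<le> S n \<omega>} \<in> sets (gen_measure {1..})"
    "{\<omega>\<in>space (gen_measure {1..}). S n \<omega> \<le> c} \<in> sets (gen_measure {1..})"
    by measurable
  then show "{\<omega>\<in>\<Omega>. c \<le> S n \<omega>} \<in> F" "{\<omega>\<in>\<Omega>. S n \<omega> \<le> c} \<in> F"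
    using gen_sigma_subset[of "{1..}"] by (auto simp: space_gen_measure sets_gen_measure)
qed

section \<open>A zero-one law for averages\<close>

text \<open>\<open>avg_below s a\<close> is the event \<open>limsup (s * S n / n) < a\<close>; \<open>s = -1\<close> turns it into a lower
  bound on \<open>liminf (S n / n)\<close>.\<close>
definition avg_below :: "real \<Rightarrow> real \<Rightarrow> 'a set" where
  "avg_below s a = {\<omega>\<in>\<Omega>. \<exists>b<a. \<forall>\<^sub>F n in sequentially. s * S n \<omega> \<le> real n * b}"

lemma avg_below_mono: "a \<le> a' \<Longrightarrow> avg_below s a \<subseteq> avg_below s a'"
  unfolding avg_below_def by (blast intro: less_le_trans)

lemma avg_below_tail: "avg_below s a \<in> gen_sigma \<Omega> Y {k+1..}"
proof -
  have [measurable]: "(\<lambda>\<omega>. \<Sum>i\<in>{k<..n}. Y i \<omega>) \<in> borel_measurable (gen_measure {k+1..})" for n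
    by (intro borel_measurable_sum Y_gen_measurable) auto
  have shift: "\<forall>\<^sub>F n in sequentially. \<bar>s * S n \<omega> - s * (\<Sum>i\<in>{k<..n}. Y i \<omega>)\<bar> \<le> \<bar>s * S k \<omega>\<bar>" for \<omega>
  proof (rule eventually_sequentiallyI[of k])
    fix n assume "k \<le> n"
    then have "{1..n} = {1..k} \<union> {k<..n}" "{1..k} \<inter> {k<..n} = {}" by auto
    then show "\<bar>s * S n \<omega> - s * (\<Sum>i\<in>{k<..n}. Y i \<omega>)\<bar> \<le> \<bar>s * S k \<omega>\<bar>"
      unfolding S_def by (simp add: sum.union_disjoint algebra_simps)
  qed
  have shift': "\<forall>\<^sub>F n in sequentially. \<bar>s * (\<Sum>i\<in>{k<..n}. Y i \<omega>) - s * S n \<omega>\<bar> \<le> \<bar>s * S k \<omega>\<bar>" for \<omega>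
    using shift by (simp add: abs_minus_commute)
  have "(\<exists>b<a. \<forall>\<^sub>F n in sequentially. s * S n \<omega> \<le> real n * b)
      \<longleftrightarrow> (\<exists>b<a. \<forall>\<^sub>F n in sequentially. s * (\<Sum>i\<in>{k<..n}. Y i \<omega>) \<le> real n * b)" for \<omega>
    using eventually_slope_below_perturb[OF _ shift] eventually_slope_below_perturb[OF _ shift'] by blast
  then have "avg_below s a = {\<omega>\<in>space (gen_measure {k+1..}).
      \<exists>j. \<forall>n\<ge>j. s * (\<Sum>i\<in>{k<..n}. Y i \<omega>) \<le> real n * (a - 1 / real (Suc j))}"
    unfolding avg_below_def space_gen_measure eventually_slope_below_iff[symmetric] by simp
  also have "\<dots> \<in> sets (gen_measure {k+1..})" by measurable
  finally show ?thesis unfolding sets_gen_measure .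
qed

lemma avg_below_in_F: "avg_below s a \<in> F"
  using avg_below_tail[of s a 0] gen_sigma_subset[of "{1..}"] by auto

text \<open>The product rule for cylinder events passes to \<open>\<Omega> - T\<close> by continuity of \<open>V\<close>, and then
  \<open>V (\<Omega> - T) * V T = V {}\<close>.\<close>
lemma tail_zero_one:
  assumes tail: "\<And>k. T \<in> gen_sigma \<Omega> Y {k+1..}"
    and compl: "\<Omega> - T = (\<Inter>j. \<Union>N. E j N)"
    and E: "\<And>j N. E j N \<in> gen_sigma \<Omega> Y {1..N+1}" and inc: "\<And>j. incseq (E j)"
    and dec: "decseq (\<lambda>j. \<Union>N. E j N)"
  shows "V T = 0 \<or> V (\<Omega> - T) = 0"
proof -
  have T: "T \<in> F" using tail[of 0] gen_sigma_subset[of "{1..}"] by auto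
  have E_F: "E j N \<in> F" for j N using E gen_sigma_subset[of "{1..N+1}"] by auto
  have "V (E j N \<inter> T) = V (E j N) * V T" for j N
    using indep[of "N + 1"] E tail[of "N + 1"] unfolding indep_sigma_def by auto
  then have "V ((\<Union>N. E j N) \<inter> T) = V (\<Union>N. E j N) * V T" for j
    using E_F by (intro upper_prob_Int_mult_incseq inc T) auto
  then have "V ((\<Inter>j. \<Union>N. E j N) \<inter> T) = V (\<Inter>j. \<Union>N. E j N) * V T"
    using E_F by (intro upper_prob_Int_mult_decseq dec T) auto
  moreover have "(\<Omega> - T) \<inter> T = {}" by blast
  ultimately have "V (\<Omega> - T) * V T = 0" unfolding compl[symmetric] by (simp add: upper_prob_empty)
  then show ?thesis by auto
qed

definition overshoot :: "real \<Rightarrow> real \<Rightarrow> nat \<Rightarrow> nat \<Rightarrow> 'a set" where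
  "overshoot s a j N = {\<omega>\<in>\<Omega>. \<exists>n\<in>{j..N}. real n * (a - 1 / real (Suc j)) < s * S n \<omega>}"

lemma UN_overshoot:
  "(\<Union>N. overshoot s a j N) = {\<omega>\<in>\<Omega>. \<exists>n\<ge>j. real n * (a - 1 / real (Suc j)) < s * S n \<omega>}"
proof
  show "(\<Union>N. overshoot s a j N) \<subseteq> {\<omega>\<in>\<Omega>. \<exists>n\<ge>j. real n * (a - 1 / real (Suc j)) < s * S n \<omega>}"
    unfolding overshoot_def by auto
  show "{\<omega>\<in>\<Omega>. \<exists>n\<ge>j. real n * (a - 1 / real (Suc j)) < s * S n \<omega>} \<subseteq> (\<Union>N. overshoot s a j N)"
  proof
    fix \<omega> assume "\<omega> \<in> {\<omega>\<in>\<Omega>. \<exists>n\<ge>j. real n * (a - 1 / real (Suc j)) < s * S n \<omega>}"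
    then obtain n where "\<omega> \<in> \<Omega>" "j \<le> n" "real n * (a - 1 / real (Suc j)) < s * S n \<omega>" by auto
    then have "\<omega> \<in> overshoot s a j n" unfolding overshoot_def by auto
    then show "\<omega> \<in> (\<Union>N. overshoot s a j N)" by blast
  qed
qed

lemma compl_avg_below_eq: "\<Omega> - avg_below s a = (\<Inter>j. \<Union>N. overshoot s a j N)"
  unfolding avg_below_def eventually_slope_below_iff UN_overshoot by (auto simp: not_le) (meson not_le)

lemma overshoot_cylinder: "overshoot s a j N \<in> gen_sigma \<Omega> Y {1..N+1}"
proof -
  have "{\<omega>\<in>space (gen_measure {1..N+1}). real n * (a - 1 / real (Suc j)) < s * S n \<omega>}
      \<in> sets (gen_measure {1..N+1})" if "n \<le> N" for n
  proof -
    have [measurable]: "S n \<in> borel_measurable (gen_measure {1..N+1})"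
      using that by (intro S_gen_measurable) auto
    show ?thesis by measurable
  qed
  then have "(\<Union>n\<in>{j..N}. {\<omega>\<in>space (gen_measure {1..N+1}). real n * (a - 1 / real (Suc j)) < s * S n \<omega>})
      \<in> sets (gen_measure {1..N+1})"
    by (intro sets.finite_UN) auto
  moreover have "overshoot s a j N = (\<Union>n\<in>{j..N}. {\<omega>\<in>\<Omega>. real n * (a - 1 / real (Suc j)) < s * S n \<omega>})"
    unfolding overshoot_def by auto
  ultimately show ?thesis unfolding sets_gen_measure space_gen_measure by simp
qed

lemma decseq_UN_overshoot: "decseq (\<lambda>j. \<Union>N. overshoot s a j N)"
proof (rule decseq_SucI)
  fix j
  show "(\<Union>N. overshoot s a (Suc j) N) \<subseteq> (\<Union>N. overshoot s a j N)"
  proof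
    fix \<omega> assume "\<omega> \<in> (\<Union>N. overshoot s a (Suc j) N)"
    then obtain n where n: "\<omega> \<in> \<Omega>" "Suc j \<le> n" "real n * (a - 1 / real (Suc (Suc j))) < s * S n \<omega>"
      unfolding UN_overshoot by auto
    have "real n * (a - 1 / real (Suc j)) \<le> real n * (a - 1 / real (Suc (Suc j)))"
      by (intro mult_left_mono) (auto simp: frac_le)
    then have "real n * (a - 1 / real (Suc j)) < s * S n \<omega>" using n(3) by linarith
    then show "\<omega> \<in> (\<Union>N. overshoot s a j N)"
      unfolding UN_overshoot using n(1,2) by (auto intro!: exI[of _ n])
  qed
qed

lemma avg_below_zero_one: "V (avg_below s a) = 0 \<or> V (\<Omega> - avg_below s a) = 0"
proof (rule tail_zero_one[OF avg_below_tail compl_avg_below_eq overshoot_cylinder _ decseq_UN_overshoot])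
  show "incseq (overshoot s a j)" for j
    by (rule incseq_SucI) (auto simp: overshoot_def)
qed

section \<open>Stationarity and a covering argument\<close>

lemma stationary_shift:
  assumes "A \<in> sets (Pi\<^sub>M {0..k} (\<lambda>_. borel))"
  shows "V {\<omega>\<in>\<Omega>. (\<lambda>i\<in>{0..k}. Y (j + 1 + i) \<omega>) \<in> A} = V {\<omega>\<in>\<Omega>. (\<lambda>i\<in>{0..k}. Y (1 + i) \<omega>) \<in> A}"
proof (induction j)
  case (Suc j)
  have "V {\<omega>\<in>\<Omega>. (\<lambda>i\<in>{0..k}. Y (n + i) \<omega>) \<in> A} = V {\<omega>\<in>\<Omega>. (\<lambda>i\<in>{0..k}. Y (n + 1 + i) \<omega>) \<in> A}"
    if "1 \<le> n" for n
    using stationary assms that unfolding stationary_def by blast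
  from this[of "Suc j"] show ?case using Suc.IH by (simp add: restrict_def)
qed simp

lemma stationary_marginal:
  assumes "B \<in> sets borel" "1 \<le> k"
  shows "V {\<omega>\<in>\<Omega>. Y k \<omega> \<in> B} = V {\<omega>\<in>\<Omega>. Y 1 \<omega> \<in> B}"
proof -
  define A where "A = {x \<in> space (Pi\<^sub>M {0..0::nat} (\<lambda>_. borel)). (x 0 :: real) \<in> B}"
  have [measurable]: "B \<in> sets borel" by (rule assms(1))
  have "A \<in> sets (Pi\<^sub>M {0..0} (\<lambda>_. borel))"
    unfolding A_def by measurable
  then have "V {\<omega>\<in>\<Omega>. (\<lambda>i\<in>{0..0}. Y (k - 1 + 1 + i) \<omega>) \<in> A} = V {\<omega>\<in>\<Omega>. (\<lambda>i\<in>{0..0}. Y (1 + i) \<omega>) \<in> A}"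
    by (rule stationary_shift)
  moreover have "{\<omega>\<in>\<Omega>. (\<lambda>i\<in>{0..0}. Y (m + i) \<omega>) \<in> A} = {\<omega>\<in>\<Omega>. Y m \<omega> \<in> B}" for m
    unfolding A_def by (auto simp: space_PiM)
  ultimately show ?thesis
    by (simp only: le_add_diff_inverse2[OF assms(2)])
qed

definition bad_block :: "real \<Rightarrow> real \<Rightarrow> nat \<Rightarrow> nat \<Rightarrow> 'a set" where
  "bad_block s a N j = {\<omega>\<in>\<Omega>. \<forall>n\<in>{1..N}. s * (\<Sum>i<n. Y (j + 1 + i) \<omega>) < real n * a}"

lemma bad_block_in_F: "bad_block s a N j \<in> F"
proof -
  have "{\<omega>\<in>space (gen_measure {1..}). \<forall>n\<in>{1..N}. s * (\<Sum>i<n. Y (j + 1 + i) \<omega>) < real n * a}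
      \<in> sets (gen_measure {1..})"
    by measurable
  then show ?thesis
    unfolding bad_block_def space_gen_measure sets_gen_measure using gen_sigma_subset[of "{1..}"] by auto
qed

lemma upper_prob_bad_block:
  assumes "1 \<le> N"
  shows "V (bad_block s a N j) = V (bad_block s a N 0)"
proof -
  let ?M = "Pi\<^sub>M {0..N - 1} (\<lambda>_. borel) :: (nat \<Rightarrow> real) measure"
  define A where "A = {x \<in> space ?M. \<forall>n\<in>{1..N}. s * (\<Sum>i<n. x i) < real n * a}"
  have "{x \<in> space ?M. s * (\<Sum>i<n. x i) < real n * a} \<in> sets ?M" if "n \<in> {1..N}" for n
  proof -
    have [measurable]: "(\<lambda>x. \<Sum>i<n. x i) \<in> borel_measurable ?M"
      using that by (intro borel_measurable_sum measurable_component_singleton) auto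
    show ?thesis by measurable
  qed
  then have "A \<in> sets ?M" unfolding A_def by (intro sets.sets_Collect_finite_All) auto
  moreover have "bad_block s a N j = {\<omega>\<in>\<Omega>. (\<lambda>i\<in>{0..N - 1}. Y (j + 1 + i) \<omega>) \<in> A}" for j
  proof -
    have "(\<Sum>i<n. (\<lambda>i\<in>{0..N - 1}. Y (j + 1 + i) \<omega>) i) = (\<Sum>i<n. Y (j + 1 + i) \<omega>)"
      if "n \<in> {1..N}" for n \<omega>
      using that by (intro sum.cong) auto
    then show ?thesis unfolding bad_block_def A_def by (auto simp: space_PiM)
  qed
  ultimately show ?thesis using stationary_shift[of A "N - 1" j] by simp
qed

lemma sum_ge_by_bad_blocks:
  assumes "\<omega> \<in> \<Omega>" "\<bar>s\<bar> \<le> 1" "a + C \<le> K" "0 \<le> K"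
  shows "a * real L - K * ((\<Sum>i<L. of_bool (\<omega> \<in> bad_block s a N i)) + real N) \<le> s * S L \<omega>"
proof -
  have "- C \<le> s * Y (Suc i) \<omega>" for i
  proof -
    have "\<bar>s * Y (Suc i) \<omega>\<bar> \<le> 1 * C"
      unfolding abs_mult using assms(1,2) bounded[of "Suc i" \<omega>] by (intro mult_mono) auto
    then show ?thesis by simp
  qed
  from sum_ge_by_blocks[of C "\<lambda>i. s * Y (Suc i) \<omega>", OF this assms(3,4), of 0 L N]
  show ?thesis
    unfolding S_eq_sum_lessThan bad_block_def atLeast0LessThan
    using assms(1) by (simp add: sum_distrib_left)
qed

text \<open>Adding \<open>sum_ge_by_bad_blocks\<close> for \<open>(1, a)\<close> and \<open>(-1, -b)\<close> shows that every point lies in at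
  least \<open>(a - b) L / K - 2 N\<close> of the \<open>2 L\<close> bad blocks starting before \<open>L\<close>; by stationarity each
  of them has the upper probability of the first one.\<close>
lemma bad_blocks_count:
  fixes a b :: real
  assumes "1 \<le> N" "1 \<le> L"
  defines "K \<equiv> \<bar>a\<bar> + \<bar>b\<bar> + C"
  shows "(a - b) / K - 2 * real N / real L \<le> V (bad_block 1 a N 0) + V (bad_block (-1) (-b) N 0)"
proof -
  have K: "0 < K" unfolding K_def using C_pos by simp
  define G where "G = case_sum (bad_block 1 a N) (bad_block (-1) (-b) N)"
  have count: "(a - b) * real L / K - 2 * real N \<le> (\<Sum>x\<in>{..<L} <+> {..<L}. of_bool (\<omega> \<in> G x))"
    if \<omega>: "\<omega> \<in> \<Omega>" for \<omega>
  proof -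
    define c1 where "c1 = (\<Sum>i<L. of_bool (\<omega> \<in> bad_block 1 a N i) :: real)"
    define c2 where "c2 = (\<Sum>i<L. of_bool (\<omega> \<in> bad_block (-1) (-b) N i) :: real)"
    have "a * real L - K * (c1 + real N) \<le> 1 * S L \<omega>"
      unfolding c1_def using \<omega> C_pos by (intro sum_ge_by_bad_blocks) (auto simp: K_def)
    moreover have "- b * real L - K * (c2 + real N) \<le> - 1 * S L \<omega>"
      unfolding c2_def using \<omega> C_pos by (intro sum_ge_by_bad_blocks) (auto simp: K_def)
    ultimately have "(a - b) * real L \<le> K * (c1 + c2 + 2 * real N)"
      by (simp add: algebra_simps)
    moreover have "(\<Sum>x\<in>{..<L} <+> {..<L}. of_bool (\<omega> \<in> G x)) = c1 + c2"
      unfolding G_def c1_def c2_def by (simp add: sum.Plus o_def del: sum_of_bool_eq)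
    ultimately show ?thesis using K by (simp add: field_simps)
  qed
  have "((a - b) * real L / K - 2 * real N) * (1 - V (\<Omega> - \<Omega>)) \<le> (\<Sum>x\<in>{..<L} <+> {..<L}. V (G x))"
    using count by (intro upper_prob_count_bound) (auto simp: G_def bad_block_in_F split: sum.split)
  also have "\<dots> = real L * (V (bad_block 1 a N 0) + V (bad_block (-1) (-b) N 0))"
  proof -
    have "(\<Sum>i<L. V (bad_block s c N i)) = (\<Sum>i<L. V (bad_block s c N 0))" for s c
      using upper_prob_bad_block[OF \<open>1 \<le> N\<close>] by (intro sum.cong) auto
    then show ?thesis by (simp add: G_def sum.Plus o_def algebra_simps)
  qed
  finally show ?thesis using \<open>1 \<le> L\<close> by (simp add: upper_prob_empty field_simps)
qed

lemma bad_blocks_frequent: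
  assumes "1 \<le> N"
  shows "(a - b) / (\<bar>a\<bar> + \<bar>b\<bar> + C) \<le> V (bad_block 1 a N 0) + V (bad_block (-1) (-b) N 0)"
proof (rule LIMSEQ_le_const2)
  have "(\<lambda>L. (a - b) / (\<bar>a\<bar> + \<bar>b\<bar> + C) - 2 * real N / real L) \<longlonglongrightarrow> (a - b) / (\<bar>a\<bar> + \<bar>b\<bar> + C) - 0"
    by (intro tendsto_diff tendsto_const lim_const_over_n)
  then show "(\<lambda>L. (a - b) / (\<bar>a\<bar> + \<bar>b\<bar> + C) - 2 * real N / real L) \<longlonglongrightarrow> (a - b) / (\<bar>a\<bar> + \<bar>b\<bar> + C)"
    by simp
  show "\<exists>L0. \<forall>L\<ge>L0. (a - b) / (\<bar>a\<bar> + \<bar>b\<bar> + C) - 2 * real N / real L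
      \<le> V (bad_block 1 a N 0) + V (bad_block (-1) (-b) N 0)"
    using bad_blocks_count[OF assms] by (intro exI[of _ 1]) auto
qed

lemma bad_block_tendsto_0:
  assumes "V (avg_below s a) = 0" "a' < a"
  shows "(\<lambda>N. V (bad_block s a' N 0)) \<longlonglongrightarrow> 0"
proof -
  have F: "range (\<lambda>N. bad_block s a' N 0) \<subseteq> F" using bad_block_in_F by auto
  have dec: "decseq (\<lambda>N. bad_block s a' N 0)" unfolding decseq_def bad_block_def by auto
  have "(\<Inter>N. bad_block s a' N 0) \<subseteq> avg_below s a"
  proof
    fix \<omega> assume \<omega>: "\<omega> \<in> (\<Inter>N. bad_block s a' N 0)"
    have "s * S n \<omega> \<le> real n * a'" if "1 \<le> n" for n
    proof -
      have "\<omega> \<in> bad_block s a' n 0" using \<omega> by blast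
      then have "s * (\<Sum>i<n. Y (0 + 1 + i) \<omega>) < real n * a'"
        using that unfolding bad_block_def by (auto dest: bspec[where x = n])
      then show ?thesis unfolding S_eq_sum_lessThan by simp
    qed
    then have "\<forall>\<^sub>F n in sequentially. s * S n \<omega> \<le> real n * a'"
      by (intro eventually_sequentiallyI)
    then show "\<omega> \<in> avg_below s a" using \<omega> assms(2) by (auto simp: avg_below_def bad_block_def)
  qed
  moreover have int_F: "(\<Inter>N. bad_block s a' N 0) \<in> F" using F by (intro countable_INT) auto
  ultimately have "V (\<Inter>N. bad_block s a' N 0) \<le> 0"
    using upper_prob_mono[OF avg_below_in_F] assms(1) by metis
  then have null: "V (\<Inter>N. bad_block s a' N 0) = 0"
    using upper_prob_nonneg[OF int_F] by (intro antisym)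
  show ?thesis using upper_prob_decseq[OF F dec] unfolding null .
qed

lemma avg_below_not_both_null:
  assumes "b < a"
  shows "V (avg_below 1 a) \<noteq> 0 \<or> V (avg_below (-1) (-b)) \<noteq> 0"
proof (rule ccontr)
  assume null: "\<not> ?thesis"
  define a' b' where "a' = (2 * a + b) / 3" and "b' = (a + 2 * b) / 3"
  have "(\<lambda>N. V (bad_block 1 a' N 0) + V (bad_block (-1) (-b') N 0)) \<longlonglongrightarrow> 0 + 0"
    using null assms unfolding a'_def b'_def by (intro tendsto_add bad_block_tendsto_0) auto
  then have lim: "(\<lambda>N. V (bad_block 1 a' N 0) + V (bad_block (-1) (-b') N 0)) \<longlonglongrightarrow> 0" by simp
  have freq: "(a' - b') / (\<bar>a'\<bar> + \<bar>b'\<bar> + C) \<le> V (bad_block 1 a' N 0) + V (bad_block (-1) (-b') N 0)"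
    if "1 \<le> N" for N
    using that by (rule bad_blocks_frequent)
  have "(a' - b') / (\<bar>a'\<bar> + \<bar>b'\<bar> + C) \<le> 0"
    by (rule LIMSEQ_le_const[OF lim], rule exI[of _ 1]) (auto intro: freq)
  moreover have "0 < (a' - b') / (\<bar>a'\<bar> + \<bar>b'\<bar> + C)"
  proof (rule divide_pos_pos)
    show "0 < a' - b'" using assms unfolding a'_def b'_def by simp
    show "0 < \<bar>a'\<bar> + \<bar>b'\<bar> + C" using C_pos abs_ge_zero[of a'] abs_ge_zero[of b'] by linarith
  qed
  ultimately show False by linarith
qed

section \<open>The almost sure limit\<close>

lemma avg_below_empty: "avg_below 1 (- C) = {}"
proof -
  have False if in_avg: "\<omega> \<in> avg_below 1 (- C)" for \<omega>
  proof -
    obtain b where \<omega>: "\<omega> \<in> \<Omega>" and b: "b < - C" and "\<forall>\<^sub>F n in sequentially. 1 * S n \<omega> \<le> real n * b"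
      using in_avg unfolding avg_below_def by blast
    then obtain M where M: "\<And>n. M \<le> n \<Longrightarrow> S n \<omega> \<le> real n * b"
      unfolding eventually_sequentially by auto
    define n where "n = Suc M"
    have "- (real n * C) \<le> S n \<omega>" using abs_S_le[OF \<omega>, of n] by linarith
    moreover have "real n * b < real n * (- C)"
      using b unfolding n_def by (intro mult_strict_left_mono) auto
    ultimately show False using M[of n] unfolding n_def by simp
  qed
  then show ?thesis by blast
qed

lemma avg_below_eq_space: "C < a \<Longrightarrow> avg_below 1 a = \<Omega>"
  unfolding avg_below_def using abs_S_le by (force simp: abs_le_iff mult.commute)

definition lim_avg :: real where "lim_avg = Sup {a. V (avg_below 1 a) = 0}"

lemma
  shows lim_avg_set_nonempty: "- C \<in> {a. V (avg_below 1 a) = 0}"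
    and lim_avg_set_bdd: "bdd_above {a. V (avg_below 1 a) = 0}"
proof -
  show "- C \<in> {a. V (avg_below 1 a) = 0}" by (simp add: avg_below_empty upper_prob_empty)
  have "a \<le> C" if "V (avg_below 1 a) = 0" for a
    using that avg_below_eq_space[of a] upper_prob_space by (cases "C < a") auto
  then show "bdd_above {a. V (avg_below 1 a) = 0}" by (auto intro!: bdd_aboveI[where M = C])
qed

lemma compl_avg_below_null:
  assumes "lim_avg < a"
  shows "V (\<Omega> - avg_below 1 a) = 0"
proof -
  have "V (avg_below 1 a) \<noteq> 0"
    using cSup_upper[OF _ lim_avg_set_bdd, of a] assms unfolding lim_avg_def by force
  then show ?thesis using avg_below_zero_one by blast
qed

lemma compl_avg_above_null:
  assumes "b < lim_avg"
  shows "V (\<Omega> - avg_below (-1) (-b)) = 0"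
proof -
  define a where "a = (b + lim_avg) / 2"
  have "a < lim_avg" "b < a" using assms unfolding a_def by auto
  then obtain x where x: "V (avg_below 1 x) = 0" "a < x"
    using less_cSup_iff[OF _ lim_avg_set_bdd] lim_avg_set_nonempty unfolding lim_avg_def by blast
  have "V (avg_below 1 a) \<le> V (avg_below 1 x)"
    using avg_below_mono[of a x] x(2) by (intro upper_prob_mono avg_below_in_F) auto
  then have "V (avg_below 1 a) = 0"
    using x(1) upper_prob_nonneg[OF avg_below_in_F] by (simp add: antisym)
  then have "V (avg_below (-1) (-b)) \<noteq> 0" using avg_below_not_both_null[OF \<open>b < a\<close>] by blast
  then show ?thesis using avg_below_zero_one by blast
qed

lemma tendsto_avg:
  assumes above: "\<And>k. \<omega> \<in> avg_below 1 (c + 1 / real (Suc k))"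
    and below: "\<And>k. \<omega> \<in> avg_below (-1) (- (c - 1 / real (Suc k)))"
  shows "(\<lambda>n. S n \<omega> / real n) \<longlonglongrightarrow> c"
proof (rule order_tendstoI)
  fix a assume "c < a"
  then obtain k where k: "1 / real (Suc k) < a - c"
    using reals_Archimedean[of "a - c"] by (auto simp: inverse_eq_divide)
  obtain b where "b < c + 1 / real (Suc k)" and ev: "\<forall>\<^sub>F n in sequentially. 1 * S n \<omega> \<le> real n * b"
    using above[of k] unfolding avg_below_def by blast
  with k have b: "b < a" by linarith
  have avg: "x / real n < a" if "0 < n" "1 * x \<le> real n * b" for n x
  proof -
    have "x / real n \<le> b" using that by (simp add: pos_divide_le_eq mult.commute)
    then show ?thesis using b by linarith
  qed
  from ev eventually_gt_at_top[of 0] show "\<forall>\<^sub>F n in sequentially. S n \<omega> / real n < a"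
    by eventually_elim (blast intro: avg)
next
  fix a assume "a < c"
  then obtain k where k: "1 / real (Suc k) < c - a"
    using reals_Archimedean[of "c - a"] by (auto simp: inverse_eq_divide)
  obtain b where "b < - (c - 1 / real (Suc k))" and ev: "\<forall>\<^sub>F n in sequentially. - 1 * S n \<omega> \<le> real n * b"
    using below[of k] unfolding avg_below_def by blast
  with k have b: "b < - a" by linarith
  have avg: "a < x / real n" if "0 < n" "- 1 * x \<le> real n * b" for n x
  proof -
    have "- b \<le> x / real n" using that by (simp add: pos_le_divide_eq mult.commute)
    then show ?thesis using b by linarith
  qed
  from ev eventually_gt_at_top[of 0] show "\<forall>\<^sub>F n in sequentially. a < S n \<omega> / real n"
    by eventually_elim (blast intro: avg)
qed

lemma avg_convergence_set_in_F: "{\<omega>\<in>\<Omega>. (\<lambda>n. S n \<omega> / real n) \<longlonglongrightarrow> c} \<in> F"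
proof -
  have "{\<omega>\<in>space (gen_measure {1..}). (\<lambda>n. S n \<omega> / real n) \<longlonglongrightarrow> c} \<in> sets (gen_measure {1..})"
    by measurable
  then show ?thesis using gen_sigma_subset[of "{1..}"] by (auto simp: space_gen_measure sets_gen_measure)
qed

lemma avg_not_convergent_null: "V (\<Omega> - {\<omega>\<in>\<Omega>. (\<lambda>n. S n \<omega> / real n) \<longlonglongrightarrow> lim_avg}) = 0"
proof -
  define T where "T k = (\<Omega> - avg_below 1 (lim_avg + 1 / real (Suc k)))
    \<union> (\<Omega> - avg_below (-1) (- (lim_avg - 1 / real (Suc k))))" for k
  have T_F: "T k \<in> F" for k unfolding T_def using avg_below_in_F by auto
  have "V (T k) = 0" for k
  proof -
    have "V (T k) \<le> V (\<Omega> - avg_below 1 (lim_avg + 1 / real (Suc k)))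
        + V (\<Omega> - avg_below (-1) (- (lim_avg - 1 / real (Suc k))))"
      unfolding T_def using avg_below_in_F by (intro upper_prob_subadditive compl_sets)
    also have "V (\<Omega> - avg_below 1 (lim_avg + 1 / real (Suc k))) = 0"
      by (rule compl_avg_below_null) simp
    also have "V (\<Omega> - avg_below (-1) (- (lim_avg - 1 / real (Suc k)))) = 0"
      by (rule compl_avg_above_null) simp
    finally show ?thesis using upper_prob_nonneg[OF T_F] by (intro antisym) auto
  qed
  then have null: "V (\<Union>k. T k) = 0" using T_F by (intro upper_prob_null_UN) auto
  have sub: "\<Omega> - {\<omega>\<in>\<Omega>. (\<lambda>n. S n \<omega> / real n) \<longlonglongrightarrow> lim_avg} \<subseteq> (\<Union>k. T k)"
  proof
    fix \<omega> assume \<omega>: "\<omega> \<in> \<Omega> - {\<omega>\<in>\<Omega>. (\<lambda>n. S n \<omega> / real n) \<longlonglongrightarrow> lim_avg}"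
    then have "\<not> ((\<forall>k. \<omega> \<in> avg_below 1 (lim_avg + 1 / real (Suc k)))
        \<and> (\<forall>k. \<omega> \<in> avg_below (-1) (- (lim_avg - 1 / real (Suc k)))))"
      using tendsto_avg by blast
    then show "\<omega> \<in> (\<Union>k. T k)" using \<omega> unfolding T_def by blast
  qed
  have "(\<Union>k. T k) \<in> F" using T_F by auto
  moreover have conv_F: "\<Omega> - {\<omega>\<in>\<Omega>. (\<lambda>n. S n \<omega> / real n) \<longlonglongrightarrow> lim_avg} \<in> F"
    using avg_convergence_set_in_F by auto
  ultimately have "V (\<Omega> - {\<omega>\<in>\<Omega>. (\<lambda>n. S n \<omega> / real n) \<longlonglongrightarrow> lim_avg}) \<le> 0"
    using upper_prob_mono[OF _ conv_F sub] null by simp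
  then show ?thesis using upper_prob_nonneg[OF conv_F] by (intro antisym)
qed

lemma lower_prob_avg_convergent: "lower_prob \<P> {\<omega>\<in>\<Omega>. (\<lambda>n. S n \<omega> / real n) \<longlonglongrightarrow> lim_avg} = 1"
  using lower_prob_eq[OF avg_convergence_set_in_F] avg_not_convergent_null by simp

section \<open>Comparison with Choquet integrals\<close>

lemma Y_grid_bounds:
  assumes "\<omega> \<in> \<Omega>" "1 \<le> k" "1 \<le> m" and d: "d = 2 * C / real m"
  shows "Y k \<omega> + C \<le> d * (\<Sum>i<m. of_bool (- C + real i * d \<le> Y k \<omega>))"
    and "d * (\<Sum>i\<in>{1..m}. of_bool (- C + real i * d \<le> Y k \<omega>)) \<le> Y k \<omega> + C"
proof -
  have "0 < d" using assms C_pos by simp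
  have Y: "0 \<le> Y k \<omega> + C" "Y k \<omega> + C \<le> real m * d"
    using bounded[OF assms(2,1)] assms(3) by (auto simp: d abs_le_iff)
  have grid: "(- C + real i * d \<le> Y k \<omega>) = (real i * d \<le> Y k \<omega> + C)" for i by auto
  show "Y k \<omega> + C \<le> d * (\<Sum>i<m. of_bool (- C + real i * d \<le> Y k \<omega>))"
    unfolding grid by (rule le_grid_count[OF \<open>0 < d\<close> Y(2)])
  show "d * (\<Sum>i\<in>{1..m}. of_bool (- C + real i * d \<le> Y k \<omega>)) \<le> Y k \<omega> + C"
    unfolding grid by (rule grid_count_le[OF \<open>0 < d\<close> Y(1)])
qed

lemma avg_bounds_compl_tendsto_0:
  assumes "0 < \<epsilon>"
  shows "(\<lambda>n. V (\<Omega> - {\<omega>\<in>\<Omega>. real n * (lim_avg - \<epsilon>) \<le> S n \<omega>})) \<longlonglongrightarrow> 0"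
    and "(\<lambda>n. V (\<Omega> - {\<omega>\<in>\<Omega>. S n \<omega> \<le> real n * (lim_avg + \<epsilon>)})) \<longlonglongrightarrow> 0"
proof -
  have ev: "\<forall>\<^sub>F n in sequentially. real n * (lim_avg - \<epsilon>) \<le> S n \<omega> \<and> S n \<omega> \<le> real n * (lim_avg + \<epsilon>)"
    if "\<omega> \<in> {\<omega>\<in>\<Omega>. (\<lambda>n. S n \<omega> / real n) \<longlonglongrightarrow> lim_avg}" for \<omega>
  proof -
    have lim: "(\<lambda>n. S n \<omega> / real n) \<longlonglongrightarrow> lim_avg" using that by simp
    have "\<forall>\<^sub>F n in sequentially. lim_avg - \<epsilon> < S n \<omega> / real n \<and> S n \<omega> / real n < lim_avg + \<epsilon>"
      using assms by (intro eventually_conj order_tendstoD[OF lim]) auto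
    with eventually_gt_at_top[of 0] show ?thesis
      by eventually_elim (auto simp: field_simps)
  qed
  show "(\<lambda>n. V (\<Omega> - {\<omega>\<in>\<Omega>. real n * (lim_avg - \<epsilon>) \<le> S n \<omega>})) \<longlonglongrightarrow> 0"
  proof (rule upper_prob_compl_tendsto_0[OF _ avg_convergence_set_in_F avg_not_convergent_null])
    show "range (\<lambda>n. {\<omega>\<in>\<Omega>. real n * (lim_avg - \<epsilon>) \<le> S n \<omega>}) \<subseteq> F"
      using S_level_sets_in_F by auto
    show "\<forall>\<^sub>F n in sequentially. \<omega> \<in> {\<omega>\<in>\<Omega>. real n * (lim_avg - \<epsilon>) \<le> S n \<omega>}"
      if "\<omega> \<in> {\<omega>\<in>\<Omega>. (\<lambda>n. S n \<omega> / real n) \<longlonglongrightarrow> lim_avg}" for \<omega>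
      by (rule eventually_mono[OF ev[OF that]]) (use that in auto)
  qed
  show "(\<lambda>n. V (\<Omega> - {\<omega>\<in>\<Omega>. S n \<omega> \<le> real n * (lim_avg + \<epsilon>)})) \<longlonglongrightarrow> 0"
  proof (rule upper_prob_compl_tendsto_0[OF _ avg_convergence_set_in_F avg_not_convergent_null])
    show "range (\<lambda>n. {\<omega>\<in>\<Omega>. S n \<omega> \<le> real n * (lim_avg + \<epsilon>)}) \<subseteq> F"
      using S_level_sets_in_F by auto
    show "\<forall>\<^sub>F n in sequentially. \<omega> \<in> {\<omega>\<in>\<Omega>. S n \<omega> \<le> real n * (lim_avg + \<epsilon>)}"
      if "\<omega> \<in> {\<omega>\<in>\<Omega>. (\<lambda>n. S n \<omega> / real n) \<longlonglongrightarrow> lim_avg}" for \<omega>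
      by (rule eventually_mono[OF ev[OF that]]) (use that in auto)
  qed
qed

lemma lim_avg_le_upper_grid_sum:
  assumes "1 \<le> m" "0 < \<epsilon>"
  defines "d \<equiv> 2 * C / real m"
  shows "lim_avg - \<epsilon> \<le> - C + d * (\<Sum>i<m. V {\<omega>\<in>\<Omega>. - C + real i * d \<le> Y 1 \<omega>})"
proof -
  have d: "0 < d" using assms C_pos by simp
  define A where "A n = {\<omega>\<in>\<Omega>. real n * (lim_avg - \<epsilon>) \<le> S n \<omega>}" for n
  have "(lim_avg - \<epsilon> + C) / d \<le> (\<Sum>i<m. V {\<omega>\<in>\<Omega>. - C + real i * d \<le> Y 1 \<omega>})"
  proof (rule upper_prob_average_count_bound[where G = "\<lambda>k i. {\<omega>\<in>\<Omega>. - C + real i * d \<le> Y k \<omega>}"])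
    show "A n \<in> F" for n unfolding A_def by (rule S_level_sets_in_F)
    show "(\<lambda>n. V (\<Omega> - A n)) \<longlonglongrightarrow> 0"
      unfolding A_def using \<open>0 < \<epsilon>\<close> by (rule avg_bounds_compl_tendsto_0(1))
    fix n \<omega> assume n: "1 \<le> n" and \<omega>: "\<omega> \<in> A n"
    have "S n \<omega> + real n * C \<le> d * (\<Sum>k=1..n. \<Sum>i<m. of_bool (- C + real i * d \<le> Y k \<omega>))"
      using Y_grid_bounds(1)[OF _ _ \<open>1 \<le> m\<close> d_def[THEN meta_eq_to_obj_eq]] \<omega>
        sum_mono[of "{1..n}" "\<lambda>k. Y k \<omega> + C"]
      unfolding A_def S_def by (auto simp: sum.distrib sum_distrib_left)
    then show "real n * ((lim_avg - \<epsilon> + C) / d)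
        \<le> (\<Sum>k=1..n. \<Sum>i<m. of_bool (\<omega> \<in> {\<omega>\<in>\<Omega>. - C + real i * d \<le> Y k \<omega>}))"
      using \<omega> d unfolding A_def by (simp add: field_simps del: sum_of_bool_eq)
  next
    fix k i :: nat assume "1 \<le> k"
    show "{\<omega>\<in>\<Omega>. - C + real i * d \<le> Y k \<omega>} \<in> F" using \<open>1 \<le> k\<close> by (rule Y_ge_in_F)
    show "V {\<omega>\<in>\<Omega>. - C + real i * d \<le> Y k \<omega>} \<le> V {\<omega>\<in>\<Omega>. - C + real i * d \<le> Y 1 \<omega>}"
      using stationary_marginal[of "{- C + real i * d..}" k] \<open>1 \<le> k\<close> by simp
  qed simp
  then show ?thesis using d by (simp add: field_simps)
qed

lemma lower_grid_sum_le_lim_avg: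
  assumes "1 \<le> m" "0 < \<epsilon>"
  defines "d \<equiv> 2 * C / real m"
  shows "- C + d * (\<Sum>i\<in>{1..m}. lower_prob \<P> {\<omega>\<in>\<Omega>. - C + real i * d \<le> Y 1 \<omega>}) \<le> lim_avg + \<epsilon>"
proof -
  have d: "0 < d" using assms C_pos by simp
  define A where "A n = {\<omega>\<in>\<Omega>. S n \<omega> \<le> real n * (lim_avg + \<epsilon>)}" for n
  have count: "real m - (lim_avg + \<epsilon> + C) / d \<le> (\<Sum>i\<in>{1..m}. V {\<omega>\<in>\<Omega>. Y 1 \<omega> < - C + real i * d})"
  proof (rule upper_prob_average_count_bound[where G = "\<lambda>k i. {\<omega>\<in>\<Omega>. Y k \<omega> < - C + real i * d}"])
    show "A n \<in> F" for n unfolding A_def by (rule S_level_sets_in_F)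
    show "(\<lambda>n. V (\<Omega> - A n)) \<longlonglongrightarrow> 0"
      unfolding A_def using \<open>0 < \<epsilon>\<close> by (rule avg_bounds_compl_tendsto_0(2))
    fix n \<omega> assume n: "1 \<le> n" and \<omega>: "\<omega> \<in> A n"
    define Z where "Z = (\<Sum>k=1..n. \<Sum>i\<in>{1..m}. of_bool (- C + real i * d \<le> Y k \<omega>) :: real)"
    have "d * Z \<le> S n \<omega> + real n * C"
      using Y_grid_bounds(2)[OF _ _ \<open>1 \<le> m\<close> d_def[THEN meta_eq_to_obj_eq]] \<omega>
        sum_mono[of "{1..n}" _ "\<lambda>k. Y k \<omega> + C"]
      unfolding A_def S_def Z_def by (auto simp: sum.distrib sum_distrib_left)
    then have Z_le: "Z \<le> real n * ((lim_avg + \<epsilon> + C) / d)"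
      using \<omega> d unfolding A_def by (simp add: pos_le_divide_eq algebra_simps)
    have eq: "(\<Sum>k=1..n. \<Sum>i\<in>{1..m}. of_bool (\<omega> \<in> {\<omega>\<in>\<Omega>. Y k \<omega> < - C + real i * d})) = real n * real m - Z"
      using \<omega> unfolding A_def Z_def
      by (simp add: not_le[symmetric] of_bool_not_iff sum_subtractf del: sum_of_bool_eq)
    show "real n * (real m - (lim_avg + \<epsilon> + C) / d)
        \<le> (\<Sum>k=1..n. \<Sum>i\<in>{1..m}. of_bool (\<omega> \<in> {\<omega>\<in>\<Omega>. Y k \<omega> < - C + real i * d}))"
      unfolding eq right_diff_distrib using Z_le by linarith
  next
    fix k i :: nat assume "1 \<le> k"
    show "{\<omega>\<in>\<Omega>. Y k \<omega> < - C + real i * d} \<in> F" using \<open>1 \<le> k\<close> by (rule Y_less_in_F)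
    show "V {\<omega>\<in>\<Omega>. Y k \<omega> < - C + real i * d} \<le> V {\<omega>\<in>\<Omega>. Y 1 \<omega> < - C + real i * d}"
      using stationary_marginal[of "{..< - C + real i * d}" k] \<open>1 \<le> k\<close> by simp
  qed simp
  have "lower_prob \<P> {\<omega>\<in>\<Omega>. t \<le> Y 1 \<omega>} = 1 - V {\<omega>\<in>\<Omega>. Y 1 \<omega> < t}" for t
  proof -
    have "\<Omega> - {\<omega>\<in>\<Omega>. t \<le> Y 1 \<omega>} = {\<omega>\<in>\<Omega>. Y 1 \<omega> < t}" by auto
    then show ?thesis using lower_prob_eq[OF Y_ge_in_F[of 1 t]] by simp
  qed
  then have "(\<Sum>i\<in>{1..m}. lower_prob \<P> {\<omega>\<in>\<Omega>. - C + real i * d \<le> Y 1 \<omega>})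
      = real m - (\<Sum>i\<in>{1..m}. V {\<omega>\<in>\<Omega>. Y 1 \<omega> < - C + real i * d})"
    by (simp add: sum_subtractf)
  then have "(\<Sum>i\<in>{1..m}. lower_prob \<P> {\<omega>\<in>\<Omega>. - C + real i * d \<le> Y 1 \<omega>}) \<le> (lim_avg + \<epsilon> + C) / d"
    using count by linarith
  then show ?thesis using d by (simp add: pos_le_divide_eq mult.commute)
qed

lemma survival_function_upper: "survival_function (\<lambda>t. V {\<omega>\<in>\<Omega>. t \<le> Y 1 \<omega>}) C"
proof
  show "V {\<omega>\<in>\<Omega>. t \<le> Y 1 \<omega>} \<le> V {\<omega>\<in>\<Omega>. s \<le> Y 1 \<omega>}" if "s \<le> t" for s t
    using that by (intro upper_prob_mono Y_ge_in_F) auto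
  show "V {\<omega>\<in>\<Omega>. t \<le> Y 1 \<omega>} = 1" if "t \<le> - C" for t
  proof -
    have "{\<omega>\<in>\<Omega>. t \<le> Y 1 \<omega>} = \<Omega>" using that bounded[of 1] by (force simp: abs_le_iff)
    then show ?thesis by (simp add: upper_prob_space)
  qed
  show "V {\<omega>\<in>\<Omega>. t \<le> Y 1 \<omega>} = 0" if "C < t" for t
  proof -
    have "{\<omega>\<in>\<Omega>. t \<le> Y 1 \<omega>} = {}" using that bounded[of 1] by (force simp: abs_le_iff)
    then show ?thesis by (metis upper_prob_empty)
  qed
qed (rule C_pos)

lemma survival_function_lower: "survival_function (\<lambda>t. lower_prob \<P> {\<omega>\<in>\<Omega>. t \<le> Y 1 \<omega>}) C"
proof -
  have eq: "lower_prob \<P> {\<omega>\<in>\<Omega>. t \<le> Y 1 \<omega>} = 1 - V {\<omega>\<in>\<Omega>. Y 1 \<omega> < t}" for t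
  proof -
    have "\<Omega> - {\<omega>\<in>\<Omega>. t \<le> Y 1 \<omega>} = {\<omega>\<in>\<Omega>. Y 1 \<omega> < t}" by auto
    then show ?thesis using lower_prob_eq[OF Y_ge_in_F[of 1 t]] by simp
  qed
  show ?thesis
  proof
    show "lower_prob \<P> {\<omega>\<in>\<Omega>. t \<le> Y 1 \<omega>} \<le> lower_prob \<P> {\<omega>\<in>\<Omega>. s \<le> Y 1 \<omega>}" if "s \<le> t" for s t
      unfolding eq using that by (auto intro!: upper_prob_mono Y_less_in_F)
    show "lower_prob \<P> {\<omega>\<in>\<Omega>. t \<le> Y 1 \<omega>} = 1" if "t \<le> - C" for t
    proof -
      have "{\<omega>\<in>\<Omega>. Y 1 \<omega> < t} = {}" using that bounded[of 1] by (force simp: abs_le_iff)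
      then show ?thesis unfolding eq by (metis diff_zero upper_prob_empty)
    qed
    show "lower_prob \<P> {\<omega>\<in>\<Omega>. t \<le> Y 1 \<omega>} = 0" if "C < t" for t
    proof -
      have "{\<omega>\<in>\<Omega>. Y 1 \<omega> < t} = \<Omega>" using that bounded[of 1] by (force simp: abs_le_iff)
      then show ?thesis unfolding eq by (simp add: upper_prob_space)
    qed
  qed (rule C_pos)
qed

lemma lim_avg_le_choquet_upper: "lim_avg \<le> choquet \<Omega> V (Y 1)"
proof -
  interpret U: survival_function "\<lambda>t. V {\<omega>\<in>\<Omega>. t \<le> Y 1 \<omega>}" C by (rule survival_function_upper)
  have choquet: "choquet \<Omega> V (Y 1) = U.survival_integral"
    unfolding choquet_def U.survival_integral_def ..
  show ?thesis
  proof (rule field_le_epsilon)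
    fix e :: real assume "0 < e"
    then obtain m where m: "1 \<le> m" "2 * C / real m < e / 2"
      using ex_mesh_less[of "e / 2" "2 * C"] half_gt_zero by blast
    have "lim_avg - e / 2
        \<le> - C + 2 * C / real m * (\<Sum>i<m. V {\<omega>\<in>\<Omega>. - C + real i * (2 * C / real m) \<le> Y 1 \<omega>})"
      using \<open>0 < e\<close> by (intro lim_avg_le_upper_grid_sum m) simp
    also have "\<dots> \<le> U.survival_integral + 2 * C / real m"
      by (rule U.Riemann_sums_survival_integral(1)[OF m(1) refl])
    finally show "lim_avg \<le> choquet \<Omega> V (Y 1) + e" using m(2) unfolding choquet by linarith
  qed
qed

lemma choquet_lower_le_lim_avg: "choquet \<Omega> (lower_prob \<P>) (Y 1) \<le> lim_avg"
proof -
  interpret L: survival_function "\<lambda>t. lower_prob \<P> {\<omega>\<in>\<Omega>. t \<le> Y 1 \<omega>}" C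
    by (rule survival_function_lower)
  have choquet: "choquet \<Omega> (lower_prob \<P>) (Y 1) = L.survival_integral"
    unfolding choquet_def L.survival_integral_def ..
  show ?thesis
  proof (rule field_le_epsilon)
    fix e :: real assume "0 < e"
    then obtain m where m: "1 \<le> m" "2 * C / real m < e / 2"
      using ex_mesh_less[of "e / 2" "2 * C"] half_gt_zero by blast
    have "L.survival_integral \<le> - C + 2 * C / real m
        * (\<Sum>i\<in>{1..m}. lower_prob \<P> {\<omega>\<in>\<Omega>. - C + real i * (2 * C / real m) \<le> Y 1 \<omega>}) + 2 * C / real m"
      by (rule L.Riemann_sums_survival_integral(2)[OF m(1) refl])
    also have "\<dots> \<le> lim_avg + e / 2 + 2 * C / real m"
      using \<open>0 < e\<close> lower_grid_sum_le_lim_avg[OF m(1), of "e / 2"] by simp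
    finally show "choquet \<Omega> (lower_prob \<P>) (Y 1) \<le> lim_avg + e" using m(2) unfolding choquet by linarith
  qed
qed

end

theorem corollary2:
  fixes \<Omega> :: "'a set" and F :: "'a set set" and \<P> :: "('a set \<Rightarrow> real) set"
    and Y :: "nat \<Rightarrow> 'a \<Rightarrow> real"
  assumes sa: "sigma_algebra \<Omega> F"
    and P_ne: "\<P> \<noteq> {}"
    and P_fa: "\<forall>P\<in>\<P>. fa_prob \<Omega> F P"
    and contV: "continuous_setfun F (upper_prob \<P>)"
    and contv: "continuous_setfun F (lower_prob \<P>)"
    and meas: "\<forall>n\<ge>1. \<forall>B\<in>sets borel. Y n -` B \<inter> \<Omega> \<in> F"
    and bdd: "\<exists>C. \<forall>n\<ge>1. \<forall>\<omega>\<in>\<Omega>. \<bar>Y n \<omega>\<bar> \<le> C"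
    and stat: "stationary \<Omega> (upper_prob \<P>) Y"
    and indep: "\<forall>n\<ge>1. indep_sigma (upper_prob \<P>)
                   (gen_sigma \<Omega> Y {1..n}) (gen_sigma \<Omega> Y {n+1..})"
  shows "\<exists>c::real.
     lower_prob \<P> {\<omega>\<in>\<Omega>. (\<lambda>n. (\<Sum>k=1..n. Y k \<omega>) / real n) \<longlonglongrightarrow> c} = 1 \<and>
     (concave_setfun F (upper_prob \<P>) \<longrightarrow>
        choquet \<Omega> (lower_prob \<P>) (Y 1) \<le> c \<and> c \<le> choquet \<Omega> (upper_prob \<P>) (Y 1))"
proof -
  obtain C where C: "\<forall>n\<ge>1. \<forall>\<omega>\<in>\<Omega>. \<bar>Y n \<omega>\<bar> \<le> C" using bdd by blast
  interpret indep_stationary_process \<Omega> F \<P> Y "\<bar>C\<bar> + 1"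
  proof (rule indep_stationary_process.intro)
    show "continuous_upper_probability \<Omega> F \<P>"
      using sa P_ne P_fa contV
      unfolding continuous_upper_probability_def continuous_upper_probability_axioms_def
        upper_probability_def upper_probability_axioms_def by blast
    show "indep_stationary_process_axioms \<Omega> F \<P> Y (\<bar>C\<bar> + 1)"
    proof
      show "Y n -` B \<inter> \<Omega> \<in> F" if "1 \<le> n" "B \<in> sets borel" for n B using meas that by blast
      show "indep_sigma (upper_prob \<P>) (gen_sigma \<Omega> Y {1..n}) (gen_sigma \<Omega> Y {n+1..})" if "1 \<le> n" for n
        using indep that by blast
      show "\<bar>Y n \<omega>\<bar> \<le> \<bar>C\<bar> + 1" if "1 \<le> n" "\<omega> \<in> \<Omega>" for n \<omega> using C that by force
    qed (simp_all add: stat)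
  qed
  show ?thesis
  proof (intro exI[of _ lim_avg] conjI impI)
    show "lower_prob \<P> {\<omega>\<in>\<Omega>. (\<lambda>n. (\<Sum>k=1..n. Y k \<omega>) / real n) \<longlonglongrightarrow> lim_avg} = 1"
      using lower_prob_avg_convergent unfolding S_def .
  qed (rule choquet_lower_le_lim_avg lim_avg_le_choquet_upper)+
qed

end
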